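(* Let $K=\mathbb{F}_q$ be a finite field, $S=K[t_1,\ldots,t_s]$, let $\mathbb{X}\subset\mathbb{P}^{s-1}$ with $|\mathbb{X}|\geq 2$, let $I=I(\mathbb{X})$, and let $\prec$ be a monomial order on $S$. Then for every $d\geq 1$, $$\delta_{\mathbb{X}}(d)=\deg(S/I)-\max\{\deg(S/(I,f)): f\in\mathcal{F}_{\prec,d}\}\geq 1.$$
   Context: $I(\mathbb{X})$ is the ideal generated by the homogeneous polynomials vanishing on $\mathbb{X}$; $V_{\mathbb{X}}(f)$ is the set of zeros of a form $f$ in $\mathbb{X}$. $\delta_{\mathbb{X}}(d)$ is the minimum distance of the projective Reed–Muller-type code of degree $d$ on $\mathbb{X}$, i.e. $\delta_{\mathbb{X}}(d)=\min\{|\mathbb{X}|-|V_{\mathbb{X}}(f)|: f\in S_d,\ f\notin I(\mathbb{X})\}$. If $\{t^{a_1},\ldots,t^{a_n}\}$ is the set of standard monomials of degree $d$ (monomials of degree $d$ not in the initial ideal $\mathrm{in}_\prec(I)$), then $\mathcal{F}_{\prec,d}=\{f=\sum_i\lambda_it^{a_i}: \lambda_i\in K,\ f\neq0,\ (I\colon f)\neq I\}$, where $(I\colon f)=\{h\in S:hf\in I\}$. For a graded ideal $J$ with Hilbert function $H_J(d)=\dim_K(S_d/J_d)$ and $k=\dim(S/J)$, $\deg(S/J)=(k-1)!\lim_{d\to\infty}H_J(d)/d^{k-1}$ if $k\geq1$ and $\dim_K(S/J)$ if $k=0$. *)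

theory Defs
  imports Complex_Main "HOL-Library.Poly_Mapping"
begin

text \<open>Polynomials in the variables t_0,...,t_(s-1) over a field K:
  finitely supported maps from monomials (exponent vectors nat =>0 nat) to K.\<close>

type_synonym 'a mpoly = "(nat \<Rightarrow>\<^sub>0 nat) \<Rightarrow>\<^sub>0 'a"

definition Pring :: "nat \<Rightarrow> ('a::field) mpoly set" where
  "Pring s = {p. \<forall>m\<in>Poly_Mapping.keys p. Poly_Mapping.keys m \<subseteq> {..<s}}"

definition mdeg :: "(nat \<Rightarrow>\<^sub>0 nat) \<Rightarrow> nat" where
  "mdeg m = (\<Sum>i\<in>Poly_Mapping.keys m. Poly_Mapping.lookup m i)"

definition Sd :: "nat \<Rightarrow> nat \<Rightarrow> ('a::field) mpoly set" where
  "Sd s d = {p \<in> Pring s. \<forall>m\<in>Poly_Mapping.keys p. mdeg m = d}"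

definition is_form :: "nat \<Rightarrow> ('a::field) mpoly \<Rightarrow> bool" where
  "is_form s f \<longleftrightarrow> (\<exists>d. f \<in> Sd s d)"

definition gen_ideal :: "nat \<Rightarrow> ('a::field) mpoly set \<Rightarrow> 'a mpoly set" where
  "gen_ideal s G = {p. \<exists>F h. finite F \<and> F \<subseteq> G \<and> (\<forall>g\<in>F. h g \<in> Pring s)
                          \<and> p = (\<Sum>g\<in>F. h g * g)}"

definition eval_mpoly :: "('a::field) mpoly \<Rightarrow> (nat \<Rightarrow> 'a) \<Rightarrow> 'a" where
  "eval_mpoly p v = (\<Sum>m\<in>Poly_Mapping.keys p. Poly_Mapping.lookup p m * (\<Prod>i\<in>Poly_Mapping.keys m. v i ^ Poly_Mapping.lookup m i))"

text \<open>Projective space P^(s-1) over K: a point is the set of nonzero scalar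
  multiples of a nonzero vector of K^s.\<close>
definition proj_space :: "nat \<Rightarrow> (nat \<Rightarrow> 'a::field) set set" where
  "proj_space s = {{(\<lambda>i. c * v i) | c. c \<noteq> 0} | v.
                     (\<forall>i\<ge>s. v i = 0) \<and> v \<noteq> (\<lambda>_. 0)}"

definition vanishes_at :: "('a::field) mpoly \<Rightarrow> (nat \<Rightarrow> 'a) set \<Rightarrow> bool" where
  "vanishes_at f P \<longleftrightarrow> (\<forall>v\<in>P. eval_mpoly f v = 0)"

definition vanishing_ideal :: "nat \<Rightarrow> (nat \<Rightarrow> 'a::field) set set \<Rightarrow> 'a mpoly set" where
  "vanishing_ideal s X = gen_ideal s {f. is_form s f \<and> (\<forall>P\<in>X. vanishes_at f P)}"

definition zeros_in :: "(nat \<Rightarrow> 'a::field) set set \<Rightarrow> 'a mpoly \<Rightarrow> (nat \<Rightarrow> 'a) set set" where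
  "zeros_in X f = {P \<in> X. vanishes_at f P}"

text \<open>Minimum distance of the projective Reed-Muller-type code of degree d on X.\<close>
definition min_dist :: "nat \<Rightarrow> (nat \<Rightarrow> 'a::field) set set \<Rightarrow> nat \<Rightarrow> nat" where
  "min_dist s X d = Min {card X - card (zeros_in X f) | f.
                           f \<in> (Sd s d :: 'a mpoly set) \<and> f \<notin> vanishing_ideal s X}"

definition monomial_order :: "nat \<Rightarrow> ((nat \<Rightarrow>\<^sub>0 nat) \<Rightarrow> (nat \<Rightarrow>\<^sub>0 nat) \<Rightarrow> bool) \<Rightarrow> bool" where
  "monomial_order s ord \<longleftrightarrow>
     (let M = {m. Poly_Mapping.keys m \<subseteq> {..<s}} in
       (\<forall>a\<in>M. \<not> ord a a) \<and>
       (\<forall>a\<in>M. \<forall>b\<in>M. \<forall>c\<in>M. ord a b \<longrightarrow> ord b c \<longrightarrow> ord a c) \<and>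
       (\<forall>a\<in>M. \<forall>b\<in>M. a = b \<or> ord a b \<or> ord b a) \<and>
       (\<forall>a\<in>M. \<forall>b\<in>M. \<forall>c\<in>M. ord a b \<longrightarrow> ord (a + c) (b + c)) \<and>
       (\<forall>a\<in>M. a \<noteq> 0 \<longrightarrow> ord 0 a))"

definition lead_mono :: "((nat \<Rightarrow>\<^sub>0 nat) \<Rightarrow> (nat \<Rightarrow>\<^sub>0 nat) \<Rightarrow> bool) \<Rightarrow> ('a::field) mpoly
                          \<Rightarrow> (nat \<Rightarrow>\<^sub>0 nat)" where
  "lead_mono ord f = (THE m. m \<in> Poly_Mapping.keys f \<and> (\<forall>m'\<in>Poly_Mapping.keys f. m' \<noteq> m \<longrightarrow> ord m' m))"

definition init_ideal :: "nat \<Rightarrow> ((nat \<Rightarrow>\<^sub>0 nat) \<Rightarrow> (nat \<Rightarrow>\<^sub>0 nat) \<Rightarrow> bool) \<Rightarrow> ('a::field) mpoly set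
                          \<Rightarrow> 'a mpoly set" where
  "init_ideal s ord I = gen_ideal s {Poly_Mapping.single (lead_mono ord f) 1 | f. f \<in> I \<and> f \<noteq> 0}"

definition std_monos :: "nat \<Rightarrow> ((nat \<Rightarrow>\<^sub>0 nat) \<Rightarrow> (nat \<Rightarrow>\<^sub>0 nat) \<Rightarrow> bool) \<Rightarrow> ('a::field) mpoly set
                          \<Rightarrow> nat \<Rightarrow> (nat \<Rightarrow>\<^sub>0 nat) set" where
  "std_monos s ord I d = {m. Poly_Mapping.keys m \<subseteq> {..<s} \<and> mdeg m = d \<and>
                            (Poly_Mapping.single m (1::'a) \<notin> init_ideal s ord I)}"

definition colon_ideal :: "nat \<Rightarrow> ('a::field) mpoly set \<Rightarrow> 'a mpoly \<Rightarrow> 'a mpoly set" where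
  "colon_ideal s I f = {h \<in> Pring s. h * f \<in> I}"

definition F_set :: "nat \<Rightarrow> ((nat \<Rightarrow>\<^sub>0 nat) \<Rightarrow> (nat \<Rightarrow>\<^sub>0 nat) \<Rightarrow> bool) \<Rightarrow> ('a::field) mpoly set
                       \<Rightarrow> nat \<Rightarrow> 'a mpoly set" where
  "F_set s ord I d = {f. Poly_Mapping.keys f \<subseteq> std_monos s ord I d \<and> f \<noteq> 0 \<and> colon_ideal s I f \<noteq> I}"

definition kscale :: "'a::field \<Rightarrow> 'a mpoly \<Rightarrow> 'a mpoly" where
  "kscale c p = Poly_Mapping.map (\<lambda>x. c * x) p"

text \<open>Hilbert function H_J(d) = dim_K (S_d / J_d) = dim_K S_d - dim_K J_d.\<close>
definition hilbert_fun :: "nat \<Rightarrow> ('a::field) mpoly set \<Rightarrow> nat \<Rightarrow> nat" where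
  "hilbert_fun s J d = vector_space.dim kscale (Sd s d :: 'a mpoly set)
                        - vector_space.dim kscale (J \<inter> Sd s d)"

definition prime_ideal_S :: "nat \<Rightarrow> ('a::field) mpoly set \<Rightarrow> bool" where
  "prime_ideal_S s P \<longleftrightarrow> gen_ideal s P = P \<and> P \<subseteq> Pring s \<and> P \<noteq> Pring s \<and>
     (\<forall>a\<in>Pring s. \<forall>b\<in>Pring s. a * b \<in> P \<longrightarrow> a \<in> P \<or> b \<in> P)"

definition krull_dim_quot :: "nat \<Rightarrow> ('a::field) mpoly set \<Rightarrow> nat" where
  "krull_dim_quot s J = Sup {n. \<exists>P :: nat \<Rightarrow> 'a mpoly set.
       (\<forall>i\<le>n. prime_ideal_S s (P i) \<and> J \<subseteq> P i) \<and> (\<forall>i<n. P i \<subset> P (Suc i))}"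

definition deg_quot :: "nat \<Rightarrow> ('a::field) mpoly set \<Rightarrow> real" where
  "deg_quot s J = (let k = krull_dim_quot s J in
     if k \<ge> 1 then fact (k - 1) * lim (\<lambda>d. real (hilbert_fun s J d) / real d ^ (k - 1))
     else suminf (\<lambda>d. real (hilbert_fun s J d)))"

end

theory Submission
  imports Defs "HOL-Computational_Algebra.Polynomial" "HOL-Library.FuncSet"
begin

text \<open>
  For a point \<open>P \<in> X\<close> with representative \<open>v\<close>, the substitution \<open>t\<^sub>i \<mapsto> v\<^sub>i T\<close> is a
  ring homomorphism \<open>S \<rightarrow> K[T]\<close> onto a principal ideal domain; its kernel \<open>p\<^sub>P\<close> is prime
  and \<open>I(X)\<close> is the intersection of the \<open>p\<^sub>P\<close>.  Every prime containing \<open>I(X)\<close> contains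
  some \<open>p\<^sub>P\<close>, so \<open>S/J\<close> has Krull dimension 1 whenever \<open>I(X) \<subseteq> J \<subseteq> p\<^sub>P\<close>.
  Interpolation by products of linear forms shows that in large degrees the forms vanishing
  on \<open>Y \<subseteq> X\<close> have codimension \<open>|Y|\<close>; hence \<open>deg(S/I) = |X|\<close> and
  \<open>deg(S/(I,f)) = |V\<^sub>X(f)|\<close> whenever \<open>f\<close> has a zero in \<open>X\<close>.

  Reducing a form of degree \<open>d\<close> by leading monomials of \<open>I\<close> gives a representative
  supported on standard monomials with the same zeros, and for such an \<open>f \<notin> I\<close> one has
  \<open>(I : f) \<noteq> I\<close> iff \<open>f\<close> has a zero in \<open>X\<close>.  So the maximum in the theorem is the largest
  number of zeros in \<open>X\<close> of a form of degree \<open>d\<close> outside \<open>I\<close>, i.e. \<open>|X| - \<delta>\<^sub>X(d)\<close>; the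
  set is nonempty because, as \<open>|X| \<ge> 2\<close>, some form of degree \<open>d\<close> vanishes at one point of
  \<open>X\<close> but not at another.
\<close>

abbreviation lookup where "lookup \<equiv> Poly_Mapping.lookup"
abbreviation keys where "keys \<equiv> Poly_Mapping.keys"
abbreviation single where "single \<equiv> Poly_Mapping.single"

lemma poly_mapping_sum_single: "p = (\<Sum>m\<in>keys p. single m (lookup p m))"
proof (rule poly_mapping_eqI)
  fix k
  show "lookup p k = lookup (\<Sum>m\<in>keys p. single m (lookup p m)) k"
    by (cases "k \<in> keys p") (auto simp: lookup_sum lookup_single when_def in_keys_iff sum.delta)
qed

text \<open>The common shape of evaluation and of restriction to a line.\<close>
definition pm_eval :: "('a::zero \<Rightarrow> 'r::comm_ring_1) \<Rightarrow> ('m \<Rightarrow> 'r) \<Rightarrow> ('m \<Rightarrow>\<^sub>0 'a) \<Rightarrow> 'r" where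
  "pm_eval \<iota> \<psi> p = (\<Sum>m\<in>keys p. \<iota> (lookup p m) * \<psi> m)"

lemma pm_eval_superset:
  assumes "finite A" "keys p \<subseteq> A" "\<iota> 0 = 0"
  shows "pm_eval \<iota> \<psi> p = (\<Sum>m\<in>A. \<iota> (lookup p m) * \<psi> m)"
  unfolding pm_eval_def by (rule sum.mono_neutral_left) (use assms in \<open>auto simp: in_keys_iff\<close>)

lemma pm_eval_add:
  fixes p q :: "'m \<Rightarrow>\<^sub>0 'a::comm_monoid_add"
  assumes "\<iota> 0 = 0" "\<And>a b. \<iota> (a + b) = \<iota> a + \<iota> b"
  shows "pm_eval \<iota> \<psi> (p + q) = pm_eval \<iota> \<psi> p + pm_eval \<iota> \<psi> q"
proof -
  let ?A = "keys p \<union> keys q"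
  have "pm_eval \<iota> \<psi> (p + q) = (\<Sum>m\<in>?A. \<iota> (lookup (p + q) m) * \<psi> m)"
    using keys_add[of p q] assms by (intro pm_eval_superset) auto
  also have "\<dots> = (\<Sum>m\<in>?A. \<iota> (lookup p m) * \<psi> m) + (\<Sum>m\<in>?A. \<iota> (lookup q m) * \<psi> m)"
    by (simp add: lookup_add assms distrib_right sum.distrib)
  also have "\<dots> = pm_eval \<iota> \<psi> p + pm_eval \<iota> \<psi> q"
    using assms by (simp add: pm_eval_superset[of ?A])
  finally show ?thesis .
qed

lemma pm_eval_zero [simp]: "pm_eval \<iota> \<psi> 0 = 0"
  by (simp add: pm_eval_def)

lemma pm_eval_sum:
  fixes f :: "'i \<Rightarrow> 'm \<Rightarrow>\<^sub>0 'a::comm_monoid_add"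
  assumes "\<iota> 0 = 0" "\<And>a b. \<iota> (a + b) = \<iota> a + \<iota> b"
  shows "pm_eval \<iota> \<psi> (sum f I) = (\<Sum>i\<in>I. pm_eval \<iota> \<psi> (f i))"
  by (induction I rule: infinite_finite_induct) (auto simp: pm_eval_add[OF assms])

lemma pm_eval_single:
  assumes "\<iota> 0 = 0"
  shows "pm_eval \<iota> \<psi> (single m c) = \<iota> c * \<psi> m"
  using assms by (auto simp: pm_eval_def)

lemma pm_eval_mult:
  fixes p q :: "('m::comm_monoid_add) \<Rightarrow>\<^sub>0 ('a::comm_semiring_0)"
  assumes i0: "\<iota> 0 = 0" and ia: "\<And>a b. \<iota> (a + b) = \<iota> a + \<iota> b"
    and im: "\<And>a b. \<iota> (a * b) = \<iota> a * \<iota> b"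
    and pa: "\<And>a b. \<psi> (a + b) = \<psi> a * \<psi> b"
  shows "pm_eval \<iota> \<psi> (p * q) = pm_eval \<iota> \<psi> p * pm_eval \<iota> \<psi> q"
proof -
  have "p * q = (\<Sum>a\<in>keys p. single a (lookup p a)) * (\<Sum>b\<in>keys q. single b (lookup q b))"
    by (metis poly_mapping_sum_single)
  also have "\<dots> = (\<Sum>a\<in>keys p. \<Sum>b\<in>keys q. single (a + b) (lookup p a * lookup q b))"
    by (simp add: sum_distrib_left sum_distrib_right mult_single sum.swap[of _ "keys q"])
  finally have "pm_eval \<iota> \<psi> (p * q) =
      (\<Sum>a\<in>keys p. \<Sum>b\<in>keys q. \<iota> (lookup p a) * \<psi> a * (\<iota> (lookup q b) * \<psi> b))"
    by (simp add: pm_eval_sum[OF i0 ia] pm_eval_single i0 im pa mult_ac)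
  also have "\<dots> = pm_eval \<iota> \<psi> p * pm_eval \<iota> \<psi> q"
    by (simp add: pm_eval_def sum_product)
  finally show ?thesis .
qed

lemma keys_add_nat: "keys (a + b :: nat \<Rightarrow>\<^sub>0 nat) = keys a \<union> keys b"
  by (auto simp: in_keys_iff lookup_add)

lemma mdeg_superset: "finite A \<Longrightarrow> keys m \<subseteq> A \<Longrightarrow> mdeg m = (\<Sum>i\<in>A. lookup m i)"
  unfolding mdeg_def by (rule sum.mono_neutral_left) (auto simp: in_keys_iff)

lemma mdeg_add: "mdeg (a + b) = mdeg a + mdeg b"
proof -
  let ?A = "keys a \<union> keys b"
  have "mdeg (a+b) = (\<Sum>i\<in>?A. lookup (a+b) i)" by (rule mdeg_superset) (auto simp: keys_add_nat)
  also have "\<dots> = (\<Sum>i\<in>?A. lookup a i) + (\<Sum>i\<in>?A. lookup b i)" by (simp add: lookup_add sum.distrib)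
  also have "\<dots> = mdeg a + mdeg b" by (simp add: mdeg_superset[of ?A])
  finally show ?thesis .
qed

lemma mdeg_zero[simp]: "mdeg 0 = 0" by (simp add: mdeg_def)

lemma mdeg_single [simp]: "mdeg (single i k) = k" by (simp add: mdeg_def)

definition mono_eval :: "(nat \<Rightarrow> 'a::comm_ring_1) \<Rightarrow> (nat \<Rightarrow>\<^sub>0 nat) \<Rightarrow> 'a" where
  "mono_eval v m = (\<Prod>i\<in>keys m. v i ^ lookup m i)"

lemma mono_eval_superset: "finite A \<Longrightarrow> keys m \<subseteq> A \<Longrightarrow> mono_eval v m = (\<Prod>i\<in>A. v i ^ lookup m i)"
  unfolding mono_eval_def by (rule prod.mono_neutral_left) (auto simp: in_keys_iff)

lemma mono_eval_add: "mono_eval v (a + b) = mono_eval v a * mono_eval v b"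
proof -
  let ?A = "keys a \<union> keys b"
  have "mono_eval v (a+b) = (\<Prod>i\<in>?A. v i ^ lookup (a+b) i)"
    by (rule mono_eval_superset) (auto simp: keys_add_nat)
  also have "\<dots> = (\<Prod>i\<in>?A. v i ^ lookup a i) * (\<Prod>i\<in>?A. v i ^ lookup b i)"
    by (simp add: lookup_add power_add prod.distrib)
  also have "\<dots> = mono_eval v a * mono_eval v b" by (simp add: mono_eval_superset[of ?A])
  finally show ?thesis .
qed

lemma mono_eval_zero[simp]: "mono_eval v 0 = 1" by (simp add: mono_eval_def)

lemma mono_eval_scale: "mono_eval (\<lambda>i. c * v i) m = c ^ mdeg m * mono_eval v m"
  by (simp add: mono_eval_def mdeg_def power_mult_distrib prod.distrib power_sum)

lemma eval_mpoly_pm_eval: "eval_mpoly p v = pm_eval id (mono_eval v) p"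
  by (simp add: eval_mpoly_def pm_eval_def mono_eval_def)

lemma eval_mpoly_add[simp]: "eval_mpoly (p + q) v = eval_mpoly p v + eval_mpoly q v"
  by (simp add: eval_mpoly_pm_eval pm_eval_add)

lemma eval_mpoly_zero[simp]: "eval_mpoly 0 v = 0"
  by (simp add: eval_mpoly_pm_eval)

lemma eval_mpoly_mult[simp]: "eval_mpoly (p * q) v = eval_mpoly p v * eval_mpoly q v"
  by (simp add: eval_mpoly_pm_eval pm_eval_mult mono_eval_add)

lemma eval_mpoly_single[simp]: "eval_mpoly (single m c) v = c * mono_eval v m"
  by (simp add: eval_mpoly_pm_eval pm_eval_single)

lemma eval_mpoly_sum: "eval_mpoly (sum f A) v = (\<Sum>i\<in>A. eval_mpoly (f i) v)"
  by (simp add: eval_mpoly_pm_eval pm_eval_sum)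

lemma eval_mpoly_uminus[simp]: "eval_mpoly (- p) v = - eval_mpoly p v"
proof -
  have "eval_mpoly (- p + p) v = 0" by simp
  then show ?thesis by (simp only: eval_mpoly_add) (simp add: eq_neg_iff_add_eq_0)
qed

lemma eval_mpoly_diff[simp]: "eval_mpoly (p - q) v = eval_mpoly p v - eval_mpoly q v"
  by (metis diff_conv_add_uminus eval_mpoly_add eval_mpoly_uminus)

lemma eval_mpoly_one[simp]: "eval_mpoly 1 v = 1"
  by (metis eval_mpoly_single mult_1 single_one mono_eval_zero)

lemma Pring_zero[simp]: "0 \<in> Pring s" by (simp add: Pring_def)
lemma Pring_one[simp]: "1 \<in> Pring s" by (simp add: Pring_def)

lemma Pring_add[intro]: "p \<in> Pring s \<Longrightarrow> q \<in> Pring s \<Longrightarrow> p + q \<in> Pring s"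
  using keys_add[of p q] by (auto simp: Pring_def)

lemma Pring_uminus[intro]: "p \<in> Pring s \<Longrightarrow> - p \<in> Pring s"
  by (auto simp: Pring_def in_keys_iff)

lemma Pring_diff[intro]: "p \<in> Pring s \<Longrightarrow> q \<in> Pring s \<Longrightarrow> p - q \<in> Pring s"
  by (metis Pring_add Pring_uminus diff_conv_add_uminus)

lemma Pring_mult[intro]: "p \<in> Pring s \<Longrightarrow> q \<in> Pring s \<Longrightarrow> p * q \<in> Pring s"
  using keys_mult[of p q] by (fastforce simp: Pring_def keys_add_nat)

lemma Pring_sum[intro]: "(\<And>i. i \<in> A \<Longrightarrow> f i \<in> Pring s) \<Longrightarrow> sum f A \<in> Pring s"
  by (induction A rule: infinite_finite_induct) auto

lemma Pring_single[intro]: "keys m \<subseteq> {..<s} \<Longrightarrow> single m c \<in> Pring s"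
  by (simp add: Pring_def)

lemma Sd_zero[simp]: "0 \<in> Sd s d" by (simp add: Sd_def)

lemma Sd_add[intro]: "p \<in> Sd s d \<Longrightarrow> q \<in> Sd s d \<Longrightarrow> p + q \<in> Sd s d"
  using keys_add[of p q] by (auto simp: Sd_def)

lemma Sd_uminus[intro]: "p \<in> Sd s d \<Longrightarrow> - p \<in> Sd s d"
  by (auto simp: Sd_def in_keys_iff)

lemma Sd_diff[intro]: "p \<in> Sd s d \<Longrightarrow> q \<in> Sd s d \<Longrightarrow> p - q \<in> Sd s d"
  by (metis Sd_add Sd_uminus diff_conv_add_uminus)

lemma Sd_mult[intro]: "p \<in> Sd s a \<Longrightarrow> q \<in> Sd s b \<Longrightarrow> p * q \<in> Sd s (a + b)"
  using keys_mult[of p q] by (fastforce simp: Sd_def mdeg_add)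

lemma Sd_sum[intro]: "(\<And>i. i \<in> A \<Longrightarrow> f i \<in> Sd s d) \<Longrightarrow> sum f A \<in> Sd s d"
  by (induction A rule: infinite_finite_induct) auto

lemma Sd_single[intro]: "keys m \<subseteq> {..<s} \<Longrightarrow> mdeg m = d \<Longrightarrow> single m c \<in> Sd s d"
  by (simp add: Sd_def Pring_def)

lemma Sd_const[intro]: "single 0 c \<in> Sd s 0"
  by (simp add: Sd_def Pring_def)

lemma Sd_Pring: "p \<in> Sd s d \<Longrightarrow> p \<in> Pring s" by (simp add: Sd_def)

lemma eval_mpoly_form_scale:
  assumes "p \<in> Sd s d"
  shows "eval_mpoly p (\<lambda>i. c * v i) = c ^ d * eval_mpoly p v"
proof -
  have "eval_mpoly p (\<lambda>i. c * v i) = (\<Sum>m\<in>keys p. lookup p m * (c ^ mdeg m * mono_eval v m))"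
    by (simp add: eval_mpoly_def mono_eval_def[symmetric] mono_eval_scale)
  also have "\<dots> = (\<Sum>m\<in>keys p. c ^ d * (lookup p m * mono_eval v m))"
    using assms by (intro sum.cong) (auto simp: Sd_def)
  also have "\<dots> = c ^ d * eval_mpoly p v"
    by (simp add: eval_mpoly_def mono_eval_def sum_distrib_left)
  finally show ?thesis .
qed

definition is_ideal :: "nat \<Rightarrow> ('a::field) mpoly set \<Rightarrow> bool" where
  "is_ideal s J \<longleftrightarrow> 0 \<in> J \<and> (\<forall>a\<in>J. \<forall>b\<in>J. a + b \<in> J) \<and> (\<forall>a\<in>J. \<forall>r\<in>Pring s. r * a \<in> J)"

lemma is_ideal_zero: "is_ideal s J \<Longrightarrow> 0 \<in> J"
  by (simp add: is_ideal_def)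

lemma is_ideal_add: "is_ideal s J \<Longrightarrow> a \<in> J \<Longrightarrow> b \<in> J \<Longrightarrow> a + b \<in> J"
  by (simp add: is_ideal_def)

lemma is_ideal_mult: "is_ideal s J \<Longrightarrow> a \<in> J \<Longrightarrow> r \<in> Pring s \<Longrightarrow> r * a \<in> J"
  by (simp add: is_ideal_def)

lemma is_ideal_mult_right: "is_ideal s J \<Longrightarrow> a \<in> J \<Longrightarrow> r \<in> Pring s \<Longrightarrow> a * r \<in> J"
  by (simp add: is_ideal_def mult.commute)

lemma is_ideal_sum: "is_ideal s J \<Longrightarrow> (\<And>i. i \<in> A \<Longrightarrow> f i \<in> J) \<Longrightarrow> sum f A \<in> J"
  by (induction A rule: infinite_finite_induct) (auto simp: is_ideal_zero is_ideal_add)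

lemma is_ideal_gen_ideal: "is_ideal s (gen_ideal s G)"
  unfolding is_ideal_def
proof (intro conjI ballI)
  show "0 \<in> gen_ideal s G" unfolding gen_ideal_def
    by (rule CollectI, rule exI[of _ "{}"]) auto
next
  fix a b assume "a \<in> gen_ideal s G" "b \<in> gen_ideal s G"
  then obtain F1 h1 F2 h2
    where F1: "finite F1" "F1 \<subseteq> G" "\<forall>g\<in>F1. h1 g \<in> Pring s" "a = (\<Sum>g\<in>F1. h1 g * g)"
    and F2: "finite F2" "F2 \<subseteq> G" "\<forall>g\<in>F2. h2 g \<in> Pring s" "b = (\<Sum>g\<in>F2. h2 g * g)"
    unfolding gen_ideal_def by blast
  define h where "h g = (if g \<in> F1 then h1 g else 0) + (if g \<in> F2 then h2 g else 0)" for g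
  have "(\<Sum>g\<in>F1 \<union> F2. h g * g) =
      (\<Sum>g\<in>F1 \<union> F2. (if g \<in> F1 then h1 g * g else 0)) +
      (\<Sum>g\<in>F1 \<union> F2. (if g \<in> F2 then h2 g * g else 0))"
    unfolding sum.distrib[symmetric] by (rule sum.cong) (auto simp: h_def distrib_right)
  also have "\<dots> = a + b"
    using F1 F2 by (simp add: sum.If_cases Int_absorb1 Int_absorb2)
  finally show "a + b \<in> gen_ideal s G" unfolding gen_ideal_def
    using F1 F2 by (intro CollectI exI[of _ "F1 \<union> F2"] exI[of _ h]) (auto simp: h_def)
next
  fix a r :: "'a mpoly" assume "a \<in> gen_ideal s G" "r \<in> Pring s"
  then obtain F h where F: "finite F" "F \<subseteq> G" "\<forall>g\<in>F. h g \<in> Pring s" "a = (\<Sum>g\<in>F. h g * g)"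
    unfolding gen_ideal_def by blast
  show "r * a \<in> gen_ideal s G" unfolding gen_ideal_def
    using F \<open>r \<in> Pring s\<close>
    by (intro CollectI exI[of _ F] exI[of _ "\<lambda>g. r * h g"]) (auto simp: sum_distrib_left mult.assoc)
qed

lemma gen_ideal_base: "g \<in> G \<Longrightarrow> g \<in> gen_ideal s G"
  unfolding gen_ideal_def by (intro CollectI exI[of _ "{g}"] exI[of _ "\<lambda>_. 1"]) auto

lemma gen_ideal_least: "G \<subseteq> J \<Longrightarrow> is_ideal s J \<Longrightarrow> gen_ideal s G \<subseteq> J"
  unfolding gen_ideal_def
  by (auto intro!: is_ideal_sum is_ideal_mult)

lemma gen_ideal_subset_Pring: "G \<subseteq> Pring s \<Longrightarrow> gen_ideal s G \<subseteq> Pring s"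
  by (rule gen_ideal_least) (auto simp: is_ideal_def)

lemma is_ideal_eval_kernel: "is_ideal s {p. eval_mpoly p w = 0}"
  by (simp add: is_ideal_def)

lemma gen_ideal_eval:
  assumes "\<And>g. g \<in> G \<Longrightarrow> eval_mpoly g w = 0" "p \<in> gen_ideal s G"
  shows "eval_mpoly p w = 0"
  using gen_ideal_least[OF _ is_ideal_eval_kernel, of G w s] assms by auto

lemma kscale_mult: "kscale c p = single 0 c * p"
  by (simp add: kscale_def mult_map_scale_conv_mult)

lemma lookup_kscale: "lookup (kscale c p) k = c * lookup p k"
  by (simp add: kscale_def map.rep_eq when_def)

lemma vector_space_kscale: "vector_space (kscale :: 'a::field \<Rightarrow> 'a mpoly \<Rightarrow> 'a mpoly)"
  by unfold_locales (simp_all add: kscale_mult distrib_left distrib_right mult.assoc mult_single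
        single_add)

lemma eval_mpoly_kscale[simp]: "eval_mpoly (kscale c p) v = c * eval_mpoly p v"
  by (simp add: kscale_mult)

lemma Sd_kscale[intro]: "p \<in> Sd s d \<Longrightarrow> kscale c p \<in> Sd s d"
  using Sd_mult[OF Sd_const, of p s d c] by (simp add: kscale_mult)

lemma Pring_kscale[intro]: "p \<in> Pring s \<Longrightarrow> kscale c p \<in> Pring s"
  using Pring_mult[of "single 0 c" s p] by (simp add: kscale_mult Pring_single)

section \<open>Restriction to lines\<close>

definition homog_comp :: "nat \<Rightarrow> ('a::field) mpoly \<Rightarrow> 'a mpoly" where
  "homog_comp k p = (\<Sum>m\<in>{m\<in>keys p. mdeg m = k}. single m (lookup p m))"

lemma lookup_homog_comp: "lookup (homog_comp k p) m = (if mdeg m = k then lookup p m else 0)"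
  unfolding homog_comp_def lookup_sum
  by (cases "m \<in> keys p") (auto simp: lookup_single when_def in_keys_iff sum.delta cong: sum.cong)

lemma keys_homog_comp: "keys (homog_comp k p) = {m\<in>keys p. mdeg m = k}"
  by (auto simp: in_keys_iff lookup_homog_comp split: if_splits)

lemma homog_comp_Sd: "p \<in> Pring s \<Longrightarrow> homog_comp k p \<in> Sd s k"
  by (auto simp: Sd_def Pring_def keys_homog_comp)

lemma sum_homog_comp: "p = (\<Sum>k\<in>mdeg ` keys p. homog_comp k p)"
proof (rule poly_mapping_eqI)
  fix m
  show "lookup p m = lookup (\<Sum>k\<in>mdeg ` keys p. homog_comp k p) m"
    by (cases "m \<in> keys p")
      (auto simp: lookup_sum lookup_homog_comp in_keys_iff sum.delta' cong: sum.cong)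
qed

lemma eval_mpoly_homog_comp:
  "eval_mpoly (homog_comp k p) v = (\<Sum>m\<in>{m\<in>keys p. mdeg m = k}. lookup p m * mono_eval v m)"
  by (simp add: homog_comp_def eval_mpoly_sum)

lemma homog_comp_form: "p \<in> Sd s k \<Longrightarrow> homog_comp k p = p"
  by (rule poly_mapping_eqI) (auto simp: lookup_homog_comp Sd_def in_keys_iff)

text \<open>\<open>restrict_line v p\<close> is the univariate polynomial \<open>p(T v)\<close>; its \<open>k\<close>-th coefficient is the
  value at \<open>v\<close> of the degree-\<open>k\<close> component of \<open>p\<close>.\<close>
definition restrict_line :: "(nat \<Rightarrow> 'a::field) \<Rightarrow> 'a mpoly \<Rightarrow> 'a poly" where
  "restrict_line v p = pm_eval (\<lambda>c. monom c 0) (\<lambda>m. monom (mono_eval v m) (mdeg m)) p"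

lemma restrict_line_add[simp]: "restrict_line v (p + q) = restrict_line v p + restrict_line v q"
  by (simp add: restrict_line_def pm_eval_add add_monom)

lemma restrict_line_mult[simp]: "restrict_line v (p * q) = restrict_line v p * restrict_line v q"
  unfolding restrict_line_def
  by (rule pm_eval_mult) (simp_all add: add_monom mult_monom mono_eval_add mdeg_add)

lemma restrict_line_zero[simp]: "restrict_line v 0 = 0" by (simp add: restrict_line_def)

lemma restrict_line_single [simp]:
  "restrict_line v (single m c) = monom (c * mono_eval v m) (mdeg m)"
  by (simp add: restrict_line_def pm_eval_single mult_monom)

lemma restrict_line_one [simp]: "restrict_line v 1 = 1"
  by (metis restrict_line_single mdeg_zero mult_1 one_poly_eq_simps(1) single_one mono_eval_zero
      monom_0 pCons_one)

lemma restrict_line_kscale [simp]: "restrict_line v (kscale c p) = smult c (restrict_line v p)"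
  by (simp add: kscale_mult monom_0)

lemma restrict_line_uminus[simp]: "restrict_line v (- p) = - restrict_line v p"
  by (metis add_eq_0_iff2 neg_eq_iff_add_eq_0 restrict_line_add restrict_line_zero)

lemma restrict_line_diff [simp]: "restrict_line v (p - q) = restrict_line v p - restrict_line v q"
  by (metis diff_conv_add_uminus restrict_line_add restrict_line_uminus)

lemma coeff_restrict_line: "coeff (restrict_line v p) k = eval_mpoly (homog_comp k p) v"
proof -
  have "restrict_line v p = (\<Sum>m\<in>keys p. monom (lookup p m * mono_eval v m) (mdeg m))"
    by (simp add: restrict_line_def pm_eval_def mult_monom)
  then have "coeff (restrict_line v p) k =
      (\<Sum>m\<in>keys p. if mdeg m = k then lookup p m * mono_eval v m else 0)"
    by (simp add: coeff_sum)
  also have "\<dots> = eval_mpoly (homog_comp k p) v"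
    by (simp add: eval_mpoly_homog_comp sum.inter_filter)
  finally show ?thesis .
qed

lemma restrict_line_form: 
  assumes "p \<in> Sd s d" shows "restrict_line v p = monom (eval_mpoly p v) d"
proof (rule poly_eqI)
  fix n
  show "coeff (restrict_line v p) n = coeff (monom (eval_mpoly p v) d) n"
  proof (cases "n = d")
    case True then show ?thesis using assms by (simp add: coeff_restrict_line homog_comp_form)
  next
    case False
    then have "{m\<in>keys p. mdeg m = n} = {}" using assms by (auto simp: Sd_def)
    then show ?thesis using False by (simp only: coeff_restrict_line eval_mpoly_homog_comp) simp
  qed
qed

lemma restrict_line_homog_comp:
  "restrict_line v (homog_comp k p) = monom (coeff (restrict_line v p) k) k"
proof (rule poly_eqI)
  fix n
  show "coeff (restrict_line v (homog_comp k p)) n = coeff (monom (coeff (restrict_line v p) k) k) n"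
    by (auto simp: coeff_restrict_line lookup_homog_comp eval_mpoly_homog_comp keys_homog_comp
        intro!: sum.neutral)
qed

definition proj_rep :: "nat \<Rightarrow> (nat \<Rightarrow> 'a::field) set \<Rightarrow> nat \<Rightarrow> 'a" where
  "proj_rep s P = (SOME v. (\<forall>i\<ge>s. v i = 0) \<and> v \<noteq> (\<lambda>_. 0) \<and> P = {(\<lambda>i. c * v i) | c. c \<noteq> 0})"

lemma proj_rep:
  assumes "P \<in> proj_space s"
  shows "\<forall>i\<ge>s. proj_rep s P i = 0" "proj_rep s P \<noteq> (\<lambda>_. 0)" "P = {(\<lambda>i. c * proj_rep s P i) | c. c \<noteq> 0}"
proof -
  from assms obtain v where "(\<forall>i\<ge>s. v i = 0) \<and> v \<noteq> (\<lambda>_. 0) \<and> P = {(\<lambda>i. c * v i) | c. c \<noteq> 0}"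
    unfolding proj_space_def by blast
  then have "(\<forall>i\<ge>s. proj_rep s P i = 0) \<and> proj_rep s P \<noteq> (\<lambda>_. 0) \<and> P = {(\<lambda>i. c * proj_rep s P i) | c. c \<noteq> 0}"
    unfolding proj_rep_def by (rule someI[where x=v])
  then show "\<forall>i\<ge>s. proj_rep s P i = 0" "proj_rep s P \<noteq> (\<lambda>_. 0)" "P = {(\<lambda>i. c * proj_rep s P i) | c. c \<noteq> 0}"
    by auto
qed

lemma proj_rep_in: assumes "P \<in> proj_space s" shows "proj_rep s P \<in> P"
proof -
  have "(\<lambda>i. 1 * proj_rep s P i) \<in> {(\<lambda>i. c * proj_rep s P i) | c. c \<noteq> 0}"
    by (rule CollectI, rule exI[of _ 1]) simp
  then show ?thesis using proj_rep(3)[OF assms] by simp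
qed

lemma proj_rep_nonzero: assumes "P \<in> proj_space s" shows "\<exists>j<s. proj_rep s P j \<noteq> 0"
proof -
  obtain j where "proj_rep s P j \<noteq> 0" using proj_rep(2)[OF assms] by (auto simp: fun_eq_iff)
  moreover then have "j < s" using proj_rep(1)[OF assms] by (meson not_le)
  ultimately show ?thesis by blast
qed

lemma vanishes_at_form_iff:
  assumes "P \<in> proj_space s" "f \<in> Sd s d"
  shows "vanishes_at f P \<longleftrightarrow> eval_mpoly f (proj_rep s P) = 0"
proof
  assume "vanishes_at f P" then show "eval_mpoly f (proj_rep s P) = 0"
    using proj_rep_in[OF assms(1)] by (simp add: vanishes_at_def)
next
  assume H: "eval_mpoly f (proj_rep s P) = 0"
  show "vanishes_at f P"
    unfolding vanishes_at_def
  proof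
    fix w assume "w \<in> P"
    then obtain c where "w = (\<lambda>i. c * proj_rep s P i)" using proj_rep(3)[OF assms(1)] by blast
    then show "eval_mpoly f w = 0" using eval_mpoly_form_scale[OF assms(2)] H by simp
  qed
qed

definition zero_points :: "nat \<Rightarrow> (nat \<Rightarrow> 'a::field) set set \<Rightarrow> 'a mpoly \<Rightarrow> (nat \<Rightarrow> 'a) set set" where
  "zero_points s X f = {P\<in>X. eval_mpoly f (proj_rep s P) = 0}"

lemma zeros_in_eq_zero_points:
  "X \<subseteq> proj_space s \<Longrightarrow> f \<in> Sd s e \<Longrightarrow> zeros_in X f = zero_points s X f"
  using vanishes_at_form_iff[of _ s f e] by (auto simp: zeros_in_def zero_points_def)

definition var_pow :: "nat \<Rightarrow> nat \<Rightarrow> ('a::field) mpoly" where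
  "var_pow i e = single (single i e) 1"

lemma eval_mpoly_var_pow[simp]: "eval_mpoly (var_pow i e) v = v i ^ e"
  by (simp add: var_pow_def mono_eval_def)

lemma var_pow_Sd[intro]: "i < s \<Longrightarrow> var_pow i e \<in> Sd s e"
  unfolding var_pow_def by (rule Sd_single) auto

lemma eval_mpoly_prod: "eval_mpoly (prod f A) v = (\<Prod>i\<in>A. eval_mpoly (f i) v)"
  by (induction A rule: infinite_finite_induct) auto

lemma Sd_prod: "(\<And>i. i \<in> A \<Longrightarrow> f i \<in> Sd s 1) \<Longrightarrow> prod f A \<in> Sd s (card A)"
proof (induction A rule: infinite_finite_induct)
  case (infinite A) then show ?case by (simp add: Sd_def)
next
  case empty then show ?case by (simp add: Sd_def)
next
  case (insert x F)
  then show ?case using Sd_mult[of "f x" s 1 "prod f F" "card F"] by simp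
qed

text \<open>The form \<open>v\<^sub>j t\<^sub>i - v\<^sub>i t\<^sub>j\<close> for a \<open>2 \<times> 2\<close> minor \<open>v\<^sub>i w\<^sub>j - v\<^sub>j w\<^sub>i \<noteq> 0\<close> of the
  representatives, which exists since \<open>P \<noteq> Q\<close>.\<close>
lemma exists_linear_form_separating:
  assumes "P \<in> proj_space s" "Q \<in> proj_space s" "P \<noteq> Q"
  shows "\<exists>L\<in>Sd s 1. eval_mpoly L (proj_rep s P) = 0 \<and> eval_mpoly L (proj_rep s Q) \<noteq> 0"
proof -
  let ?v = "proj_rep s P" and ?w = "proj_rep s Q"
  have "\<exists>i j. ?v i * ?w j \<noteq> ?v j * ?w i"
  proof (rule ccontr)
    assume H: "\<not> ?thesis"
    obtain j where j: "j < s" "?v j \<noteq> 0" using proj_rep_nonzero[OF assms(1)] by blast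
    define c where "c = ?w j / ?v j"
    have w: "?w i = c * ?v i" for i
      using H j by (auto simp: c_def field_simps)
    have "c \<noteq> 0" using proj_rep(2)[OF assms(2)] w by (auto simp: fun_eq_iff)
    have "Q = {(\<lambda>i. a * ?w i) | a. a \<noteq> 0}" by (rule proj_rep(3)[OF assms(2)])
    also have "\<dots> = {(\<lambda>i. a * ?v i) | a. a \<noteq> 0}"
    proof safe
      fix a :: 'a assume "a \<noteq> 0" then show "\<exists>b. (\<lambda>i. a * ?w i) = (\<lambda>i. b * ?v i) \<and> b \<noteq> 0"
        using \<open>c \<noteq> 0\<close> by (intro exI[of _ "a * c"]) (auto simp: w)
    next
      fix a :: 'a assume "a \<noteq> 0" then show "\<exists>b. (\<lambda>i. a * ?v i) = (\<lambda>i. b * ?w i) \<and> b \<noteq> 0"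
        using \<open>c \<noteq> 0\<close> by (intro exI[of _ "a / c"]) (auto simp: w)
    qed
    also have "\<dots> = P" by (rule proj_rep(3)[OF assms(1), symmetric])
    finally show False using assms(3) by simp
  qed
  then obtain i j where ij: "?v i * ?w j \<noteq> ?v j * ?w i" by blast
  have "i < s"
    using ij proj_rep(1)[OF assms(1)] proj_rep(1)[OF assms(2)] by (metis mult_zero_left mult_zero_right not_le)
  have "j < s"
    using ij proj_rep(1)[OF assms(1)] proj_rep(1)[OF assms(2)] by (metis mult_zero_left mult_zero_right not_le)
  define L :: "'a mpoly" where "L = kscale (?v j) (var_pow i 1) - kscale (?v i) (var_pow j 1)"
  have "L \<in> Sd s 1" using \<open>i<s\<close> \<open>j<s\<close> by (auto simp: L_def)
  moreover have "eval_mpoly L ?v = 0" by (simp add: L_def mult.commute)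
  moreover have "eval_mpoly L ?w \<noteq> 0" using ij by (simp add: L_def mult.commute)
  ultimately show ?thesis by blast
qed

lemma exists_interpolating_form:
  assumes "X \<subseteq> proj_space s" "finite X" "P \<in> X" "card X - 1 \<le> e"
  shows "\<exists>f\<in>Sd s e. eval_mpoly f (proj_rep s P) = 1 \<and> (\<forall>Q\<in>X - {P}. eval_mpoly f (proj_rep s Q) = 0)"
proof -
  have "\<forall>Q\<in>X - {P}. \<exists>L\<in>Sd s 1. eval_mpoly L (proj_rep s Q) = 0 \<and> eval_mpoly L (proj_rep s P) \<noteq> 0"
    using assms exists_linear_form_separating by (metis DiffE insertI1 subsetD)
  then obtain L where L: "\<And>Q. Q \<in> X - {P} \<Longrightarrow>
      L Q \<in> Sd s 1 \<and> eval_mpoly (L Q) (proj_rep s Q) = 0 \<and> eval_mpoly (L Q) (proj_rep s P) \<noteq> 0"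
    by metis
  obtain j where j: "j < s" "proj_rep s P j \<noteq> 0" using proj_rep_nonzero assms by blast
  have cX: "card (X - {P}) = card X - 1" using assms by simp
  define f0 where "f0 = prod L (X - {P}) * var_pow j (e - (card X - 1))"
  have f0: "f0 \<in> Sd s e"
    unfolding f0_def using Sd_mult[OF Sd_prod var_pow_Sd[OF j(1)], of "X - {P}" L "e - (card X - 1)"] L cX assms(4)
    by auto
  have f0P: "eval_mpoly f0 (proj_rep s P) \<noteq> 0"
    using L j assms(2) by (simp add: f0_def eval_mpoly_prod prod_zero_iff)
  have f0Q: "eval_mpoly f0 (proj_rep s Q) = 0" if "Q \<in> X - {P}" for Q
    using that L assms(2) by (simp add: f0_def eval_mpoly_prod prod_zero_iff) blast
  show ?thesis
    using f0 f0P f0Q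
    by (intro bexI[of _ "kscale (1 / eval_mpoly f0 (proj_rep s P)) f0"]) auto
qed

section \<open>Prime ideals of univariate polynomials\<close>

definition is_poly_ideal :: "'a::field poly set \<Rightarrow> bool" where
  "is_poly_ideal p \<longleftrightarrow> 0 \<in> p \<and> (\<forall>a\<in>p. \<forall>b\<in>p. a + b \<in> p) \<and> (\<forall>a\<in>p. \<forall>r. r * a \<in> p)"

lemma is_poly_ideal_diff: "is_poly_ideal p \<Longrightarrow> a \<in> p \<Longrightarrow> b \<in> p \<Longrightarrow> a - b \<in> p"
  unfolding is_poly_ideal_def
  by (metis diff_conv_add_uminus mult_minus1)

lemma min_degree_dvd:
  assumes "is_poly_ideal p" "\<pi> \<in> p" "\<pi> \<noteq> 0" "\<forall>y\<in>p - {0}. degree \<pi> \<le> degree y" "b \<in> p"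
  shows "\<pi> dvd b"
proof -
  have "b mod \<pi> = b - (b div \<pi>) * \<pi>" by (simp add: minus_div_mult_eq_mod)
  also have "\<dots> \<in> p" using assms(1,2,5) by (intro is_poly_ideal_diff) (auto simp: is_poly_ideal_def)
  finally have "b mod \<pi> \<in> p" .
  then have "b mod \<pi> = 0" using assms(3,4) degree_mod_less[of \<pi> b] by force
  then show ?thesis by (simp add: mod_eq_0_iff_dvd)
qed

lemma min_degree_exists:
  assumes "y0 \<in> p" "y0 \<noteq> (0::'a::field poly)"
  obtains \<pi> where "\<pi> \<in> p" "\<pi> \<noteq> 0" "\<forall>y\<in>p - {0}. degree \<pi> \<le> degree y"
proof -
  define n where "n = (LEAST n. \<exists>y\<in>p - {0}. degree y = n)"
  have "\<exists>y\<in>p - {0}. degree y = n"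
    unfolding n_def by (rule LeastI[of _ "degree y0"]) (use assms in auto)
  then obtain \<pi> where "\<pi> \<in> p - {0}" "degree \<pi> = n" by blast
  moreover have "\<forall>y\<in>p - {0}. n \<le> degree y" unfolding n_def by (auto intro: Least_le)
  ultimately show ?thesis using that by auto
qed

lemma nonzero_prime_poly_ideal_maximal:
  fixes p1 p2 :: "'a::field poly set"
  assumes "is_poly_ideal p1" "is_poly_ideal p2" "p1 \<subset> p2" "p1 \<noteq> {0}"
    and prime: "\<And>a b. a * b \<in> p1 \<Longrightarrow> a \<in> p1 \<or> b \<in> p1"
  shows "1 \<in> p2"
proof -
  obtain y0 where "y0 \<in> p1" "y0 \<noteq> 0" using assms(1,4) unfolding is_poly_ideal_def by blast
  then obtain \<pi> where pi: "\<pi> \<in> p1" "\<pi> \<noteq> 0" "\<forall>y\<in>p1 - {0}. degree \<pi> \<le> degree y"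
    using min_degree_exists by blast
  have "\<pi> \<in> p2" using pi assms(3) by blast
  then obtain \<pi>' where pi': "\<pi>' \<in> p2" "\<pi>' \<noteq> 0" "\<forall>y\<in>p2 - {0}. degree \<pi>' \<le> degree y"
    using min_degree_exists pi(2) by blast
  have "\<pi>' dvd \<pi>" using min_degree_dvd[OF assms(2) pi'] \<open>\<pi> \<in> p2\<close> by blast
  then obtain c where c: "\<pi> = \<pi>' * c" by (auto elim: dvdE)
  have "\<pi>' \<notin> p1"
  proof
    assume "\<pi>' \<in> p1"
    have "p2 \<subseteq> p1"
    proof
      fix b assume "b \<in> p2"
      then obtain e where "b = \<pi>' * e" using min_degree_dvd[OF assms(2) pi'] by (auto elim: dvdE)
      then show "b \<in> p1"
        using \<open>\<pi>' \<in> p1\<close> assms(1) unfolding is_poly_ideal_def by (metis mult.commute)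
    qed
    then show False using assms(3) by blast
  qed
  then have "c \<in> p1" using prime c pi(1) by blast
  then obtain d where "c = \<pi> * d" using min_degree_dvd[OF assms(1) pi] by (auto elim: dvdE)
  then have "\<pi> * 1 = \<pi> * (\<pi>' * d)" using c by (simp add: mult_ac)
  then have "\<pi>' * d = 1" using pi(2) by (metis mult_left_cancel)
  then show "1 \<in> p2" using pi'(1) assms(2) unfolding is_poly_ideal_def by (metis mult.commute)
qed

lemma gen_ideal_self: "is_ideal s J \<Longrightarrow> J \<subseteq> Pring s \<Longrightarrow> gen_ideal s J = J"
  using gen_ideal_least[of J J s] gen_ideal_base[of _ J s] by blast

lemma is_ideal_vanishing_ideal: "is_ideal s (vanishing_ideal s X)"
  by (simp add: vanishing_ideal_def is_ideal_gen_ideal)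

lemma vanishing_ideal_subset_Pring: "vanishing_ideal s X \<subseteq> Pring s"
  unfolding vanishing_ideal_def by (rule gen_ideal_subset_Pring) (auto simp: is_form_def Sd_def)

lemma form_in_vanishing_ideal_iff:
  assumes "X \<subseteq> proj_space s" "f \<in> Sd s d"
  shows "f \<in> vanishing_ideal s X \<longleftrightarrow> (\<forall>P\<in>X. eval_mpoly f (proj_rep s P) = 0)"
proof
  assume "f \<in> vanishing_ideal s X"
  show "\<forall>P\<in>X. eval_mpoly f (proj_rep s P) = 0"
  proof
    fix P assume "P \<in> X"
    then have P: "P \<in> proj_space s" using assms by blast
    show "eval_mpoly f (proj_rep s P) = 0"
      using \<open>f \<in> vanishing_ideal s X\<close> unfolding vanishing_ideal_def
      by (rule gen_ideal_eval[rotated]) (use \<open>P \<in> X\<close> proj_rep_in[OF P] in \<open>auto simp: vanishes_at_def\<close>)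
  qed
next
  assume "\<forall>P\<in>X. eval_mpoly f (proj_rep s P) = 0"
  then have "\<forall>P\<in>X. vanishes_at f P" using vanishes_at_form_iff[OF _ assms(2)] assms(1) by blast
  then show "f \<in> vanishing_ideal s X" unfolding vanishing_ideal_def
    using assms(2) by (intro gen_ideal_base) (auto simp: is_form_def)
qed

definition point_ideal :: "nat \<Rightarrow> (nat \<Rightarrow> 'a::field) set \<Rightarrow> 'a mpoly set" where
  "point_ideal s P = {p \<in> Pring s. restrict_line (proj_rep s P) p = 0}"

lemma is_ideal_point_ideal: "is_ideal s (point_ideal s P)"
  by (auto simp: is_ideal_def point_ideal_def)

lemma vanishing_ideal_subset_point_ideal:
  assumes "X \<subseteq> proj_space s" "P \<in> X"
  shows "vanishing_ideal s X \<subseteq> point_ideal s P"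
  unfolding vanishing_ideal_def
proof (rule gen_ideal_least[OF _ is_ideal_point_ideal])
  show "{f. is_form s f \<and> (\<forall>P\<in>X. vanishes_at f P)} \<subseteq> point_ideal s P"
  proof
    fix f assume "f \<in> {f. is_form s f \<and> (\<forall>P\<in>X. vanishes_at f P)}"
    then obtain d where f: "f \<in> Sd s d" "vanishes_at f P" using assms by (auto simp: is_form_def)
    then have "eval_mpoly f (proj_rep s P) = 0" using vanishes_at_form_iff[OF _ f(1)] assms by blast
    then show "f \<in> point_ideal s P"
      using f restrict_line_form[OF f(1)] by (simp add: point_ideal_def Sd_Pring)
  qed
qed

lemma mem_vanishing_ideal_iff:
  assumes "X \<subseteq> proj_space s"
  shows "p \<in> vanishing_ideal s X \<longleftrightarrow> p \<in> Pring s \<and> (\<forall>P\<in>X. restrict_line (proj_rep s P) p = 0)"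
proof
  assume "p \<in> vanishing_ideal s X"
  then show "p \<in> Pring s \<and> (\<forall>P\<in>X. restrict_line (proj_rep s P) p = 0)"
    using vanishing_ideal_subset_Pring vanishing_ideal_subset_point_ideal[OF assms] unfolding point_ideal_def by blast
next
  assume H: "p \<in> Pring s \<and> (\<forall>P\<in>X. restrict_line (proj_rep s P) p = 0)"
  have "homog_comp k p \<in> vanishing_ideal s X" for k
  proof -
    have "homog_comp k p \<in> Sd s k" using H homog_comp_Sd by blast
    moreover have "\<forall>P\<in>X. eval_mpoly (homog_comp k p) (proj_rep s P) = 0"
      using H by (simp flip: coeff_restrict_line)
    ultimately show ?thesis using form_in_vanishing_ideal_iff[OF assms] by blast
  qed
  then have "(\<Sum>k\<in>mdeg ` keys p. homog_comp k p) \<in> vanishing_ideal s X"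
    unfolding vanishing_ideal_def by (intro is_ideal_sum[OF is_ideal_gen_ideal]) (simp add: vanishing_ideal_def)
  then show "p \<in> vanishing_ideal s X" using sum_homog_comp[of p] by simp
qed

lemma vanishing_ideal_homog_comp:
  assumes "X \<subseteq> proj_space s" "p \<in> vanishing_ideal s X"
  shows "homog_comp k p \<in> vanishing_ideal s X"
  using assms homog_comp_Sd[of p s k] Sd_Pring[of "homog_comp k p" s k]
  by (auto simp: mem_vanishing_ideal_iff restrict_line_homog_comp)

lemma restrict_line_form_eq_0_iff:
  assumes "f \<in> Sd s d" shows "restrict_line v f = 0 \<longleftrightarrow> eval_mpoly f v = 0"
  using assms by (simp add: restrict_line_form)

lemma colon_ideal_nonvanishing:
  assumes "X \<subseteq> proj_space s" "f \<in> Sd s d" "\<forall>P\<in>X. eval_mpoly f (proj_rep s P) \<noteq> 0"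
  shows "colon_ideal s (vanishing_ideal s X) f = vanishing_ideal s X"
proof
  show "colon_ideal s (vanishing_ideal s X) f \<subseteq> vanishing_ideal s X"
  proof
    fix h assume "h \<in> colon_ideal s (vanishing_ideal s X) f"
    then have h: "h \<in> Pring s" "h * f \<in> vanishing_ideal s X" by (auto simp: colon_ideal_def)
    have "\<forall>P\<in>X. restrict_line (proj_rep s P) h = 0"
    proof
      fix P assume "P \<in> X"
      then have "restrict_line (proj_rep s P) h * restrict_line (proj_rep s P) f = 0"
        using h(2) assms(1) by (auto simp: mem_vanishing_ideal_iff)
      moreover have "restrict_line (proj_rep s P) f \<noteq> 0"
        using assms(3) \<open>P\<in>X\<close> restrict_line_form_eq_0_iff[OF assms(2)] by blast
      ultimately show "restrict_line (proj_rep s P) h = 0" by simp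
    qed
    then show "h \<in> vanishing_ideal s X" using h(1) mem_vanishing_ideal_iff[OF assms(1)] by blast
  qed
next
  show "vanishing_ideal s X \<subseteq> colon_ideal s (vanishing_ideal s X) f"
    using assms(2) vanishing_ideal_subset_Pring[of s X] unfolding colon_ideal_def vanishing_ideal_def
    by (auto intro: is_ideal_mult_right[OF is_ideal_gen_ideal] Sd_Pring)
qed

lemma colon_ideal_vanishing:
  assumes "X \<subseteq> proj_space s" "finite X" "f \<in> Sd s d" "P \<in> X" "eval_mpoly f (proj_rep s P) = 0"
  shows "colon_ideal s (vanishing_ideal s X) f \<noteq> vanishing_ideal s X"
proof -
  obtain h where h: "h \<in> Sd s (card X - 1)" "eval_mpoly h (proj_rep s P) = 1"
      "\<forall>Q\<in>X - {P}. eval_mpoly h (proj_rep s Q) = 0"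
    using exists_interpolating_form[OF assms(1,2,4) order.refl] by blast
  have "h \<notin> vanishing_ideal s X"
    using h(2) form_in_vanishing_ideal_iff[OF assms(1) h(1)] assms(4) by auto
  moreover have "h * f \<in> vanishing_ideal s X"
  proof -
    have "h * f \<in> Sd s (card X - 1 + d)" using h(1) assms(3) by blast
    moreover have "\<forall>Q\<in>X. eval_mpoly (h * f) (proj_rep s Q) = 0" using h(3) assms(5) by auto
    ultimately show ?thesis using form_in_vanishing_ideal_iff[OF assms(1)] by blast
  qed
  moreover have "h \<in> Pring s" using h(1) by (rule Sd_Pring)
  ultimately show ?thesis unfolding colon_ideal_def by blast
qed

section \<open>Krull dimension\<close>

lemma mdeg_eq_0: assumes "mdeg m = 0" shows "m = 0"
proof -
  have "\<forall>i\<in>keys m. lookup m i = 0" using assms by (simp add: mdeg_def)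
  then have "keys m = {}" using in_keys_iff by blast
  then show ?thesis by simp
qed

lemma mono_eval_zero_vec: "mono_eval (\<lambda>_. 0::'a::field) m = (if m = 0 then 1 else 0)"
proof (cases "m = 0")
  case False
  then have "keys m \<noteq> {}" by simp
  then obtain i where "i \<in> keys m" by blast
  then have "(0::'a) ^ lookup m i = 0" by (simp add: in_keys_iff)
  then have "mono_eval (\<lambda>_. 0::'a) m = 0" unfolding mono_eval_def
    using \<open>i \<in> keys m\<close> by (intro prod_zero) auto
  then show ?thesis using False by simp
qed simp

lemma eval_mpoly_zero_vec: "eval_mpoly p (\<lambda>_. 0::'a::field) = lookup p 0"
proof -
  have "eval_mpoly p (\<lambda>_. 0::'a) = (\<Sum>x\<in>keys p. if x = 0 then lookup p x else 0)"
    unfolding eval_mpoly_def mono_eval_def[symmetric] mono_eval_zero_vec by (intro sum.cong) auto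
  also have "\<dots> = lookup p 0" by (simp add: sum.delta' in_keys_iff)
  finally show ?thesis .
qed

lemma coeff_restrict_line_0: "coeff (restrict_line v p) 0 = lookup (p::'a::field mpoly) 0"
proof -
  have "{m\<in>keys p. mdeg m = 0} = (if 0 \<in> keys p then {0} else {})" using mdeg_eq_0 by auto
  then show ?thesis by (auto simp: coeff_restrict_line eval_mpoly_homog_comp in_keys_iff)
qed

lemma prime_ideal_S_kernel:
  fixes F :: "'a::field mpoly \<Rightarrow> 'b::idom"
  assumes "\<And>p q. F (p + q) = F p + F q" "\<And>p q. F (p * q) = F p * F q" "F 0 = 0" "F 1 \<noteq> 0"
  shows "prime_ideal_S s {p \<in> Pring s. F p = 0}"
proof -
  have I: "is_ideal s {p \<in> Pring s. F p = 0}" using assms by (auto simp: is_ideal_def)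
  show ?thesis unfolding prime_ideal_S_def
  proof (intro conjI)
    show "gen_ideal s {p \<in> Pring s. F p = 0} = {p \<in> Pring s. F p = 0}"
      by (rule gen_ideal_self[OF I]) auto
    show "{p \<in> Pring s. F p = 0} \<noteq> Pring s" using assms(4) Pring_one by blast
  qed (use assms in auto)
qed

lemma prime_point_ideal: "prime_ideal_S s (point_ideal s P)"
  unfolding point_ideal_def by (rule prime_ideal_S_kernel) auto

definition irrelevant_ideal :: "nat \<Rightarrow> ('a::field) mpoly set" where
  "irrelevant_ideal s = {p \<in> Pring s. eval_mpoly p (\<lambda>_. 0) = 0}"

lemma prime_irrelevant_ideal: "prime_ideal_S s (irrelevant_ideal s)"
  unfolding irrelevant_ideal_def by (rule prime_ideal_S_kernel) auto

lemma point_ideal_psubset_irrelevant_ideal: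
  assumes "P \<in> proj_space s"
  shows "point_ideal s P \<subset> irrelevant_ideal s"
proof
  show "point_ideal s P \<subseteq> irrelevant_ideal s" unfolding point_ideal_def irrelevant_ideal_def
  proof (intro subsetI CollectI conjI)
    fix p assume "p \<in> {p \<in> Pring s. restrict_line (proj_rep s P) p = 0}"
    then have "p \<in> Pring s" "restrict_line (proj_rep s P) p = 0" by auto
    then show "p \<in> Pring s" "eval_mpoly p (\<lambda>_. 0) = 0"
      using coeff_restrict_line_0[of "proj_rep s P" p] by (auto simp: eval_mpoly_zero_vec)
  qed
  obtain j where j: "j < s" "proj_rep s P j \<noteq> 0" using proj_rep_nonzero[OF assms] by blast
  have "var_pow j 1 \<in> Pring s" using j by (intro Sd_Pring[OF var_pow_Sd])
  have "single j (1::nat) \<noteq> 0" by (metis lookup_single_eq lookup_zero one_neq_zero)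
  then have "var_pow j 1 \<in> irrelevant_ideal s" using \<open>var_pow j 1 \<in> Pring s\<close>
    by (simp add: irrelevant_ideal_def eval_mpoly_zero_vec var_pow_def lookup_single when_def)
  moreover have "var_pow j 1 \<notin> point_ideal s P"
    using j restrict_line_form[OF var_pow_Sd[OF j(1)], of "proj_rep s P" 1]
    by (simp add: point_ideal_def)
  ultimately show "point_ideal s P \<noteq> irrelevant_ideal s" by blast
qed

lemma restrict_line_sum: "restrict_line v (sum f A) = (\<Sum>i\<in>A. restrict_line v (f i))"
  by (induction A rule: infinite_finite_induct) auto

lemma restrict_line_surj:
  assumes "j < s" "v j \<noteq> 0"
  shows "\<exists>p\<in>Pring s. restrict_line v p = u"
proof -
  define p where "p = (\<Sum>i\<le>degree u. kscale (coeff u i / v j ^ i) (var_pow j i))"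
  have "p \<in> Pring s" unfolding p_def
    by (intro Pring_sum Pring_kscale Sd_Pring[OF var_pow_Sd[OF assms(1)]])
  moreover have "restrict_line v p = (\<Sum>i\<le>degree u. monom (coeff u i) i)"
    unfolding p_def restrict_line_sum using assms
    by (intro sum.cong) (simp_all add: restrict_line_form[OF var_pow_Sd[OF assms(1)]] smult_monom)
  ultimately show ?thesis by (auto simp: poly_as_sum_of_monoms)
qed

lemma Pring_prod: "(\<And>i. i \<in> A \<Longrightarrow> f i \<in> Pring s) \<Longrightarrow> prod f A \<in> Pring s"
  by (induction A rule: infinite_finite_induct) auto

lemma prime_ideal_S_is_ideal: "prime_ideal_S s Q \<Longrightarrow> is_ideal s Q"
  using is_ideal_gen_ideal[of s Q] unfolding prime_ideal_S_def by simp

lemma prime_ideal_S_one_notin: "prime_ideal_S s Q \<Longrightarrow> 1 \<notin> Q"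
proof
  assume Q: "prime_ideal_S s Q" "1 \<in> Q"
  then have "Pring s \<subseteq> Q" using is_ideal_mult[OF prime_ideal_S_is_ideal[OF Q(1)] Q(2)] by fastforce
  then show False using Q(1) unfolding prime_ideal_S_def by blast
qed

lemma prime_ideal_S_prod_notin:
  assumes Q: "prime_ideal_S s Q" and "finite A" "\<And>x. x \<in> A \<Longrightarrow> g x \<in> Pring s - Q"
  shows "prod g A \<notin> Q"
  using assms(2,3)
proof (induction A rule: finite_induct)
  case empty
  then show ?case using prime_ideal_S_one_notin[OF Q] by simp
next
  case (insert x A)
  then have "g x \<in> Pring s" "g x \<notin> Q" "prod g A \<in> Pring s" "prod g A \<notin> Q"
    by (auto intro: Pring_prod)
  then show ?case using Q insert.hyps unfolding prime_ideal_S_def by auto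
qed

text \<open>Otherwise choose \<open>g\<^sub>P \<in> point_ideal s P - Q\<close>; the product of the \<open>g\<^sub>P\<close> lies in
  \<open>I(X) \<subseteq> Q\<close>, contradicting primality.\<close>
lemma prime_contains_point_ideal:
  assumes "X \<subseteq> proj_space s" "finite X" "prime_ideal_S s Q" "vanishing_ideal s X \<subseteq> Q"
  shows "\<exists>P\<in>X. point_ideal s P \<subseteq> Q"
proof (rule ccontr)
  assume "\<not> ?thesis"
  then have "\<forall>P\<in>X. \<exists>g. g \<in> point_ideal s P \<and> g \<notin> Q" by blast
  then obtain g where g: "\<And>P. P \<in> X \<Longrightarrow> g P \<in> point_ideal s P \<and> g P \<notin> Q" by metis
  then have gP: "g P \<in> Pring s" if "P \<in> X" for P using that by (simp add: point_ideal_def)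
  have "restrict_line (proj_rep s P) (prod g X) = 0" if "P \<in> X" for P
  proof -
    have "restrict_line (proj_rep s P) (prod g X) = (\<Prod>Q\<in>X. restrict_line (proj_rep s P) (g Q))"
      by (induction X rule: infinite_finite_induct) auto
    also have "\<dots> = 0" using that g[OF that] assms(2) by (auto simp: point_ideal_def)
    finally show ?thesis .
  qed
  then have "prod g X \<in> vanishing_ideal s X"
    using gP by (auto simp: mem_vanishing_ideal_iff[OF assms(1)] intro: Pring_prod)
  moreover have "prod g X \<notin> Q"
    using g gP by (intro prime_ideal_S_prod_notin[OF assms(3,2)]) blast
  ultimately show False using assms(4) by blast
qed

text \<open>Since \<open>restrict_line (proj_rep s P)\<close> maps \<open>S\<close> onto \<open>K[T]\<close> with kernel \<open>point_ideal s P\<close>,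
  primes above \<open>point_ideal s P\<close> are mapped to prime ideals of \<open>K[T]\<close>, where chains are short.\<close>
context
  fixes s :: nat and P :: "(nat \<Rightarrow> 'a::field) set"
  assumes P: "P \<in> proj_space s"
begin

lemma restrict_line_image_mem_iff:
  assumes Q: "prime_ideal_S s Q" "point_ideal s P \<subseteq> Q" and x: "x \<in> Pring s"
  shows "restrict_line (proj_rep s P) x \<in> restrict_line (proj_rep s P) ` Q \<longleftrightarrow> x \<in> Q"
proof
  assume "restrict_line (proj_rep s P) x \<in> restrict_line (proj_rep s P) ` Q"
  then obtain q where q: "q \<in> Q" "restrict_line (proj_rep s P) x = restrict_line (proj_rep s P) q"
    by blast
  have QP: "Q \<subseteq> Pring s" using Q(1) by (simp add: prime_ideal_S_def)
  have "x - q \<in> point_ideal s P" using q x QP by (auto simp: point_ideal_def)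
  then have "x - q \<in> Q" using Q(2) by blast
  then have "(x - q) + q \<in> Q" using is_ideal_add[OF prime_ideal_S_is_ideal[OF Q(1)]] q(1) by blast
  then show "x \<in> Q" by simp
qed blast

lemma is_poly_ideal_restrict_line_image:
  assumes Q: "prime_ideal_S s Q"
  shows "is_poly_ideal (restrict_line (proj_rep s P) ` Q)"
proof -
  have I: "is_ideal s Q" and QP: "Q \<subseteq> Pring s"
    using Q prime_ideal_S_is_ideal by (auto simp: prime_ideal_S_def)
  obtain j where j: "j < s" "proj_rep s P j \<noteq> 0" using proj_rep_nonzero[OF P] by blast
  show ?thesis unfolding is_poly_ideal_def
  proof (intro conjI ballI allI)
    show "0 \<in> restrict_line (proj_rep s P) ` Q"
      using is_ideal_zero[OF I] by (metis image_eqI restrict_line_zero)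
  next
    fix a b assume "a \<in> restrict_line (proj_rep s P) ` Q" "b \<in> restrict_line (proj_rep s P) ` Q"
    then obtain a' b' where "a' \<in> Q" "b' \<in> Q"
        "a = restrict_line (proj_rep s P) a'" "b = restrict_line (proj_rep s P) b'"
      by blast
    then show "a + b \<in> restrict_line (proj_rep s P) ` Q"
      using is_ideal_add[OF I] by (metis image_eqI restrict_line_add)
  next
    fix a r assume "a \<in> restrict_line (proj_rep s P) ` Q"
    then obtain a' where a': "a' \<in> Q" "a = restrict_line (proj_rep s P) a'" by blast
    obtain r' where r': "r' \<in> Pring s" "restrict_line (proj_rep s P) r' = r"
      using restrict_line_surj[of j s "proj_rep s P", OF j] by blast
    have "r' * a' \<in> Q" using is_ideal_mult[OF I a'(1) r'(1)] .
    then show "r * a \<in> restrict_line (proj_rep s P) ` Q"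
      using a' r' by (metis image_eqI restrict_line_mult)
  qed
qed

lemma restrict_line_image_prime:
  assumes Q: "prime_ideal_S s Q" "point_ideal s P \<subseteq> Q" and ab: "a * b \<in> restrict_line (proj_rep s P) ` Q"
  shows "a \<in> restrict_line (proj_rep s P) ` Q \<or> b \<in> restrict_line (proj_rep s P) ` Q"
proof -
  obtain j where j: "j < s" "proj_rep s P j \<noteq> 0" using proj_rep_nonzero[OF P] by blast
  obtain a' where a': "a' \<in> Pring s" "restrict_line (proj_rep s P) a' = a"
    using restrict_line_surj[of j s "proj_rep s P", OF j] by blast
  obtain b' where b': "b' \<in> Pring s" "restrict_line (proj_rep s P) b' = b"
    using restrict_line_surj[of j s "proj_rep s P", OF j] by blast
  have "a' * b' \<in> Q" using restrict_line_image_mem_iff[OF Q, of "a' * b'"] a' b' ab by auto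
  then have "a' \<in> Q \<or> b' \<in> Q" using Q(1) a'(1) b'(1) unfolding prime_ideal_S_def by blast
  then show ?thesis using a' b' by blast
qed

lemma no_prime_chain_above_point_ideal:
  assumes Q0: "prime_ideal_S s Q0" "point_ideal s P \<subseteq> Q0"
    and Q1: "prime_ideal_S s Q1" and Q2: "prime_ideal_S s Q2"
    and "Q0 \<subset> Q1" "Q1 \<subset> Q2"
  shows False
proof -
  let ?f = "restrict_line (proj_rep s P)"
  have K1: "point_ideal s P \<subseteq> Q1" and K2: "point_ideal s P \<subseteq> Q2" using assms by auto
  have P1: "Q1 \<subseteq> Pring s" "Q2 \<subseteq> Pring s" using Q1 Q2 by (auto simp: prime_ideal_S_def)
  have sub: "?f ` Q1 \<subset> ?f ` Q2"
  proof
    show "?f ` Q1 \<subseteq> ?f ` Q2" using assms by blast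
    obtain x where "x \<in> Q2" "x \<notin> Q1" using assms(6) by blast
    then have "?f x \<in> ?f ` Q2" "?f x \<notin> ?f ` Q1"
      using restrict_line_image_mem_iff[OF Q1 K1, of x] P1 by auto
    then show "?f ` Q1 \<noteq> ?f ` Q2" by blast
  qed
  have nz: "?f ` Q1 \<noteq> {0}"
  proof
    assume H: "?f ` Q1 = {0}"
    obtain x where "x \<in> Q1" "x \<notin> Q0" using assms(5) by blast
    moreover then have "?f x = 0" using H by blast
    ultimately show False
      using restrict_line_image_mem_iff[OF Q0, of x] P1
      by (metis image_eqI restrict_line_zero is_ideal_zero prime_ideal_S_is_ideal Q0(1) subsetD)
  qed
  have one: "1 \<notin> ?f ` Q2"
    using restrict_line_image_mem_iff[OF Q2 K2, of 1] prime_ideal_S_one_notin[OF Q2] by simp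
  show False
    using nonzero_prime_poly_ideal_maximal[OF is_poly_ideal_restrict_line_image[OF Q1]
        is_poly_ideal_restrict_line_image[OF Q2] sub nz] restrict_line_image_prime[OF Q1 K1] one
    by blast
qed

end

lemma prime_chain_above_vanishing_ideal_length_le_1:
  fixes C :: "nat \<Rightarrow> 'a::field mpoly set"
  assumes X: "X \<subseteq> proj_space s" "finite X"
    and C: "\<forall>i\<le>n. prime_ideal_S s (C i) \<and> vanishing_ideal s X \<subseteq> C i" "\<forall>i<n. C i \<subset> C (Suc i)"
  shows "n \<le> 1"
proof (rule ccontr)
  assume "\<not> n \<le> 1"
  then have n: "2 \<le> n" by simp
  have C0: "prime_ideal_S s (C 0)" "vanishing_ideal s X \<subseteq> C 0" using C(1) by auto
  obtain R where R: "R \<in> X" "point_ideal s R \<subseteq> C 0"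
    using prime_contains_point_ideal[OF X C0] by blast
  have "R \<in> proj_space s" using R X by blast
  moreover have "prime_ideal_S s (C 1)" "prime_ideal_S s (C 2)" using C(1) n by auto
  moreover have "C 0 \<subset> C 1" "C 1 \<subset> C 2" using C(2) n by (auto simp: numeral_2_eq_2)
  ultimately show False
    using no_prime_chain_above_point_ideal[OF _ C0(1) R(2)] by blast
qed

lemma krull_dim_quot_eq_1:
  assumes X: "X \<subseteq> proj_space s" "finite X"
    and J: "vanishing_ideal s X \<subseteq> J" "P \<in> X" "J \<subseteq> point_ideal s P"
  shows "krull_dim_quot s J = 1"
proof -
  let ?S = "{n. \<exists>C :: nat \<Rightarrow> 'a mpoly set.
       (\<forall>i\<le>n. prime_ideal_S s (C i) \<and> J \<subseteq> C i) \<and> (\<forall>i<n. C i \<subset> C (Suc i))}"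
  have le: "\<forall>n\<in>?S. n \<le> 1"
  proof
    fix n assume "n \<in> ?S"
    then obtain C :: "nat \<Rightarrow> 'a mpoly set" where
      "\<forall>i\<le>n. prime_ideal_S s (C i) \<and> J \<subseteq> C i" "\<forall>i<n. C i \<subset> C (Suc i)" by blast
    then show "n \<le> 1"
      using J(1) by (intro prime_chain_above_vanishing_ideal_length_le_1[OF X, of n C]) blast+
  qed
  have "1 \<in> ?S"
  proof -
    define C where "C i = (if i = 0 then point_ideal s P else irrelevant_ideal s)" for i :: nat
    have PP: "P \<in> proj_space s" using X J by blast
    have "\<forall>i\<le>1. prime_ideal_S s (C i) \<and> J \<subseteq> C i"
      using prime_point_ideal prime_irrelevant_ideal J point_ideal_psubset_irrelevant_ideal[OF PP]
      by (auto simp: C_def)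
    moreover have "\<forall>i<1. C i \<subset> C (Suc i)"
      using point_ideal_psubset_irrelevant_ideal[OF PP] by (auto simp: C_def)
    ultimately show ?thesis by blast
  qed
  then show ?thesis
    unfolding krull_dim_quot_def by (rule cSup_eq_maximum) (use le in blast)
qed

section \<open>Hilbert functions and degrees\<close>

text \<open>A basis of the common kernel of the \<open>lam i\<close> together with a dual family \<open>e\<close> is a basis
  of \<open>V\<close>.\<close>
context vector_space begin

lemma independent_Un_dual_family:
  fixes lam :: "'i \<Rightarrow> 'b \<Rightarrow> 'a" and e :: "'i \<Rightarrow> 'b"
  assumes B: "independent B" "\<And>b i. b \<in> B \<Longrightarrow> i \<in> Y \<Longrightarrow> lam i b = 0"
    and delta: "\<And>i j. i \<in> Y \<Longrightarrow> j \<in> Y \<Longrightarrow> lam i (e j) = (if i = j then 1 else 0)"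
    and ladd: "\<And>i x y. lam i (x + y) = lam i x + lam i y"
    and lscale: "\<And>i c x. lam i (c *s x) = c * lam i x"
  shows "independent (B \<union> e ` Y)"
  unfolding independent_explicit_finite_subsets
proof (intro allI impI ballI)
  have l0: "lam i 0 = 0" for i using lscale[of i 0 0] by simp
  have lsum: "lam i (sum f A) = (\<Sum>a\<in>A. lam i (f a))" for i f A
    by (induction A rule: infinite_finite_induct) (auto simp: l0 ladd)
  fix S u v assume S: "S \<subseteq> B \<union> e ` Y" "finite S" and sum0: "(\<Sum>v\<in>S. u v *s v) = 0" and "v \<in> S"
  have uE: "u w = 0" if w: "w \<in> S" "i \<in> Y" "w = e i" for w i
  proof -
    have "0 = lam i (\<Sum>v\<in>S. u v *s v)" using sum0 l0 by simp
    also have "\<dots> = (\<Sum>v\<in>S. if v = w then u v else 0)"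
      unfolding lsum lscale
    proof (rule sum.cong)
      fix v assume "v \<in> S"
      then consider "v \<in> B" | k where "k \<in> Y" "v = e k" using S(1) by blast
      then show "u v * lam i v = (if v = w then u v else 0)"
      proof cases
        case 1
        then show ?thesis using B(2)[of v i] delta[of i i] w by auto
      next
        case (2 k)
        then show ?thesis using delta[of i k] delta[of i i] w by auto
      qed
    qed simp
    also have "\<dots> = u w" using w S(2) by simp
    finally show ?thesis by simp
  qed
  have "(\<Sum>v\<in>S \<inter> B. u v *s v) = (\<Sum>v\<in>S. u v *s v)"
    by (rule sum.mono_neutral_left) (use S uE in auto)
  then have "(\<Sum>v\<in>S \<inter> B. u v *s v) = 0" using sum0 by simp
  then have uB: "u w = 0" if "w \<in> S \<inter> B" for w
    using B(1) S(2) that unfolding independent_explicit_finite_subsets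
    by (metis inf_le2 finite_Int)
  show "u v = 0" using uE uB S(1) \<open>v \<in> S\<close> by blast
qed

lemma dim_eq_dim_kernels_plus_card:
  fixes lam :: "'i \<Rightarrow> 'b \<Rightarrow> 'a" and e :: "'i \<Rightarrow> 'b"
  assumes V: "subspace V" and F: "finite F" "V \<subseteq> span F" and Y: "finite Y"
    and eV: "\<And>i. i \<in> Y \<Longrightarrow> e i \<in> V"
    and delta: "\<And>i j. i \<in> Y \<Longrightarrow> j \<in> Y \<Longrightarrow> lam i (e j) = (if i = j then 1 else 0)"
    and ladd: "\<And>i x y. lam i (x + y) = lam i x + lam i y"
    and lscale: "\<And>i c x. lam i (c *s x) = c * lam i x"
  shows "dim V = dim {x\<in>V. \<forall>i\<in>Y. lam i x = 0} + card Y"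
proof -
  define W where "W = {x\<in>V. \<forall>i\<in>Y. lam i x = 0}"
  have l0: "lam i 0 = 0" for i using lscale[of i 0 0] by simp
  have lsum: "lam i (sum f A) = (\<Sum>a\<in>A. lam i (f a))" for i f A
    by (induction A rule: infinite_finite_induct) (auto simp: l0 ladd)
  have Wsub: "subspace W" unfolding W_def subspace_def
    using V by (auto simp: l0 ladd lscale subspace_0 subspace_add subspace_scale)
  obtain B where B: "B \<subseteq> W" "independent B" "W \<subseteq> span B" "card B = dim W"
    using basis_exists by blast
  have finB: "finite B"
    using B(1) F(2) independent_span_bound[OF F(1) B(2)] unfolding W_def by blast
  have inj: "inj_on e Y"
    by (rule inj_onI) (use delta in \<open>metis one_neq_zero\<close>)
  have disj: "B \<inter> e ` Y = {}"
    using B(1) delta unfolding W_def by fastforce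
  have indep: "independent (B \<union> e ` Y)"
    using B(1) by (intro independent_Un_dual_family[OF B(2) _ delta ladd lscale]) (auto simp: W_def)
  have span: "V \<subseteq> span (B \<union> e ` Y)"
  proof
    fix x assume x: "x \<in> V"
    define y where "y = (\<Sum>i\<in>Y. lam i x *s e i)"
    have yV: "y \<in> V" unfolding y_def using V eV by (auto intro!: subspace_sum subspace_scale)
    have "lam j y = lam j x" if "j \<in> Y" for j
    proof -
      have "lam j y = (\<Sum>i\<in>Y. lam i x * (if j = i then 1 else 0))"
        unfolding y_def lsum lscale using delta that by (intro sum.cong) auto
      also have "\<dots> = lam j x" using that Y by (simp add: if_distrib cong: if_cong)
      finally show ?thesis .
    qed
    then have "x - y \<in> W"
      using subspace_diff[OF V x yV] ladd[of _ "x - y" y] by (auto simp: W_def)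
    then have "x - y \<in> span (B \<union> e ` Y)" using B(3) span_mono[of B "B \<union> e ` Y"] by blast
    moreover have "y \<in> span (B \<union> e ` Y)" unfolding y_def
      by (intro span_sum span_scale span_base) auto
    ultimately have "(x - y) + y \<in> span (B \<union> e ` Y)" by (rule span_add)
    then show "x \<in> span (B \<union> e ` Y)" by simp
  qed
  have "B \<union> e ` Y \<subseteq> V" using B(1) eV unfolding W_def by blast
  then have "dim V = card (B \<union> e ` Y)" using dim_unique[OF _ span indep] by simp
  also have "\<dots> = card B + card Y"
    using card_Un_disjoint[OF finB _ disj] Y card_image[OF inj] by simp
  finally show ?thesis using B(4) unfolding W_def by simp
qed

end

lemma finite_poly_mappings_bounded:
  assumes "finite A" "finite B"
  shows "finite {p :: 'm \<Rightarrow>\<^sub>0 'a::zero. keys p \<subseteq> A \<and> (\<forall>i. lookup p i \<in> B)}"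
    (is "finite ?P")
proof -
  define r where "r p = (\<lambda>i. if i \<in> A then lookup p i else undefined)" for p :: "'m \<Rightarrow>\<^sub>0 'a"
  have "inj_on r ?P"
  proof (rule inj_onI)
    fix p q assume pq: "p \<in> ?P" "q \<in> ?P" "r p = r q"
    show "p = q"
    proof (rule poly_mapping_eqI)
      fix i show "lookup p i = lookup q i"
      proof (cases "i \<in> A")
        case True
        then show ?thesis using fun_cong[OF pq(3), of i] by (simp add: r_def)
      next
        case False
        then have "i \<notin> keys p" "i \<notin> keys q" using pq by auto
        then show ?thesis by (simp add: in_keys_iff)
      qed
    qed
  qed
  moreover have "r ` ?P \<subseteq> PiE A (\<lambda>_. B)" by (auto simp: r_def PiE_iff extensional_def)
  moreover have "finite (PiE A (\<lambda>_. B))" using assms by (simp add: finite_PiE)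
  ultimately show ?thesis by (meson finite_imageD finite_subset)
qed

definition monos_deg :: "nat \<Rightarrow> nat \<Rightarrow> (nat \<Rightarrow>\<^sub>0 nat) set" where
  "monos_deg s d = {m. keys m \<subseteq> {..<s} \<and> mdeg m = d}"

lemma lookup_le_mdeg: "lookup m i \<le> mdeg m"
proof (cases "i \<in> keys m")
  case True
  then show ?thesis unfolding mdeg_def by (intro member_le_sum) auto
qed (simp add: in_keys_iff)

lemma finite_monos_deg: "finite (monos_deg s d)"
proof (rule finite_subset)
  show "monos_deg s d \<subseteq> {m. keys m \<subseteq> {..<s} \<and> (\<forall>i. lookup m i \<in> {..d})}"
    using lookup_le_mdeg by (auto simp: monos_deg_def)
  show "finite {m :: nat \<Rightarrow>\<^sub>0 nat. keys m \<subseteq> {..<s} \<and> (\<forall>i. lookup m i \<in> {..d})}"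
    by (rule finite_poly_mappings_bounded) simp_all
qed

lemma kscale_single: "kscale c (single m 1) = single m c"
  by (simp add: kscale_mult mult_single)

lemma module_kscale: "module (kscale :: 'a::field \<Rightarrow> 'a mpoly \<Rightarrow> 'a mpoly)"
  using vector_space_kscale by (simp add: module_iff_vector_space)

lemma Sd_span: "Sd s n \<subseteq> module.span kscale ((\<lambda>m. single m (1::'a::field)) ` monos_deg s n)"
proof
  fix g :: "'a::field mpoly" assume g: "g \<in> Sd s n"
  have "g = (\<Sum>m\<in>keys g. kscale (lookup g m) (single m 1))"
    by (subst poly_mapping_sum_single) (simp add: kscale_single)
  also have "\<dots> \<in> module.span kscale ((\<lambda>m. single m 1) ` monos_deg s n)"
    using g by (intro module.span_sum[OF module_kscale] module.span_scale[OF module_kscale]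
        module.span_base[OF module_kscale]) (auto simp: Sd_def Pring_def monos_deg_def)
  finally show "g \<in> module.span kscale ((\<lambda>m. single m 1) ` monos_deg s n)" .
qed

lemma Sd_subspace: "module.subspace kscale (Sd s n :: 'a::field mpoly set)"
  by (auto simp: module.subspace_def[OF module_kscale])

text \<open>The interpolating forms of the points of \<open>Y\<close> are dual to evaluation at those points.\<close>
lemma hilbert_fun_eq_card:
  fixes X :: "(nat \<Rightarrow> 'a::field) set set" and J :: "'a mpoly set"
  assumes X: "X \<subseteq> proj_space s" "finite X" and Y: "Y \<subseteq> X" and n: "card X - 1 \<le> n"
    and J: "J \<inter> Sd s n = {g \<in> Sd s n. \<forall>P\<in>Y. eval_mpoly g (proj_rep s P) = 0}"
  shows "hilbert_fun s J n = card Y"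
proof -
  have "\<forall>P\<in>Y. \<exists>f. f \<in> Sd s n \<and> eval_mpoly f (proj_rep s P) = 1 \<and>
      (\<forall>Q\<in>X - {P}. eval_mpoly f (proj_rep s Q) = 0)"
    using exists_interpolating_form[OF X _ n] Y by blast
  then obtain e where e: "\<And>P. P \<in> Y \<Longrightarrow> e P \<in> Sd s n \<and> eval_mpoly (e P) (proj_rep s P) = 1 \<and>
      (\<forall>Q\<in>X - {P}. eval_mpoly (e P) (proj_rep s Q) = 0)" by metis
  have finY: "finite Y" using X(2) Y finite_subset by blast
  have "vector_space.dim kscale (Sd s n :: 'a mpoly set) =
      vector_space.dim kscale {x \<in> Sd s n. \<forall>P\<in>Y. eval_mpoly x (proj_rep s P) = 0} + card Y"
  proof (rule vector_space.dim_eq_dim_kernels_plus_card[OF vector_space_kscale Sd_subspace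
        finite_imageI[OF finite_monos_deg] Sd_span finY])
    show "\<And>P. P \<in> Y \<Longrightarrow> e P \<in> Sd s n" using e by blast
    show "eval_mpoly (e Q) (proj_rep s P) = (if P = Q then 1 else 0)" if "P \<in> Y" "Q \<in> Y" for P Q
      using e[OF that(2)] that Y by auto
  qed auto
  then show ?thesis unfolding hilbert_fun_def J by simp
qed

lemma vanishing_ideal_Sd:
  assumes "X \<subseteq> proj_space s"
  shows "vanishing_ideal s X \<inter> Sd s n = {g \<in> Sd s n. \<forall>P\<in>X. eval_mpoly g (proj_rep s P) = 0}"
  using form_in_vanishing_ideal_iff[OF assms] by blast

lemma poly_restrict_line_1: "poly (restrict_line v p) 1 = eval_mpoly p v"
proof -
  have "restrict_line v p = (\<Sum>m\<in>keys p. monom (lookup p m * mono_eval v m) (mdeg m))"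
    by (simp add: restrict_line_def pm_eval_def mult_monom)
  then show ?thesis by (simp add: poly_sum poly_monom eval_mpoly_def mono_eval_def)
qed

lemma eval_mpoly_gen_ideal_insert:
  assumes "X \<subseteq> proj_space s" "P \<in> zero_points s X f" "g \<in> gen_ideal s (insert f (vanishing_ideal s X))"
  shows "eval_mpoly g (proj_rep s P) = 0"
proof (rule gen_ideal_eval[OF _ assms(3)])
  fix h assume "h \<in> insert f (vanishing_ideal s X)"
  moreover have "restrict_line (proj_rep s P) h = 0" if "h \<in> vanishing_ideal s X"
    using that vanishing_ideal_subset_point_ideal[OF assms(1)] assms(2)
    by (auto simp: point_ideal_def zero_points_def)
  ultimately show "eval_mpoly h (proj_rep s P) = 0"
    using assms(2) poly_restrict_line_1[of "proj_rep s P" h] by (auto simp: zero_points_def)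
qed

text \<open>In degree \<open>n\<close>, a form vanishing on the zeros of \<open>f\<close> agrees on \<open>X\<close> with \<open>h f\<close>, where \<open>h\<close>
  interpolates the quotient of the two forms at the remaining points.\<close>
lemma exists_multiple_congruent:
  assumes X: "X \<subseteq> proj_space s" "finite X" and f: "f \<in> Sd s d" and n: "d + (card X - 1) \<le> n"
    and g: "g \<in> Sd s n" "\<forall>P\<in>zero_points s X f. eval_mpoly g (proj_rep s P) = 0"
  shows "\<exists>h\<in>Sd s (n - d). g - h * f \<in> vanishing_ideal s X"
proof -
  let ?Z = "zero_points s X f"
  let ?q = "\<lambda>P. eval_mpoly g (proj_rep s P) / eval_mpoly f (proj_rep s P)"
  have "card X - 1 \<le> n - d" using n by simp
  then have "\<forall>P\<in>X. \<exists>e. e \<in> Sd s (n - d) \<and> eval_mpoly e (proj_rep s P) = 1 \<and>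
      (\<forall>Q\<in>X - {P}. eval_mpoly e (proj_rep s Q) = 0)"
    using exists_interpolating_form[OF X] by blast
  then obtain e where e: "\<And>P. P \<in> X \<Longrightarrow> e P \<in> Sd s (n - d) \<and> eval_mpoly (e P) (proj_rep s P) = 1 \<and>
      (\<forall>Q\<in>X - {P}. eval_mpoly (e P) (proj_rep s Q) = 0)" by metis
  define h where "h = (\<Sum>P\<in>X - ?Z. kscale (?q P) (e P))"
  have h: "h \<in> Sd s (n - d)" unfolding h_def using e by (intro Sd_sum Sd_kscale) auto
  have "eval_mpoly h (proj_rep s Q) = (if Q \<in> X - ?Z then ?q Q else 0)" if "Q \<in> X" for Q
  proof -
    have "eval_mpoly h (proj_rep s Q) = (\<Sum>P\<in>X - ?Z. if P = Q then ?q P else 0)"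
      unfolding h_def eval_mpoly_sum eval_mpoly_kscale using e that by (intro sum.cong) auto
    also have "\<dots> = (if Q \<in> X - ?Z then ?q Q else 0)"
      using X(2) by (simp add: sum.delta')
    finally show ?thesis .
  qed
  then have "\<forall>Q\<in>X. eval_mpoly (g - h * f) (proj_rep s Q) = 0"
    using g(2) by (auto simp: zero_points_def)
  moreover have "h * f \<in> Sd s n" using Sd_mult[OF h f] n by simp
  then have "g - h * f \<in> Sd s n" using g(1) by blast
  ultimately show ?thesis using h form_in_vanishing_ideal_iff[OF X(1)] by blast
qed

lemma gen_ideal_insert_Sd:
  assumes X: "X \<subseteq> proj_space s" "finite X" and f: "f \<in> Sd s d" and n: "d + (card X - 1) \<le> n"
  shows "gen_ideal s (insert f (vanishing_ideal s X)) \<inter> Sd s n =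
         {g \<in> Sd s n. \<forall>P\<in>zero_points s X f. eval_mpoly g (proj_rep s P) = 0}"
    (is "?J \<inter> _ = _")
proof (intro equalityI subsetI)
  fix g assume "g \<in> ?J \<inter> Sd s n"
  then show "g \<in> {g \<in> Sd s n. \<forall>P\<in>zero_points s X f. eval_mpoly g (proj_rep s P) = 0}"
    using eval_mpoly_gen_ideal_insert[OF X(1)] by blast
next
  fix g assume g: "g \<in> {g \<in> Sd s n. \<forall>P\<in>zero_points s X f. eval_mpoly g (proj_rep s P) = 0}"
  then obtain h where h: "h \<in> Sd s (n - d)" "g - h * f \<in> vanishing_ideal s X"
    using exists_multiple_congruent[OF X f n] by blast
  have "g - h * f \<in> ?J" using h(2) gen_ideal_base[of _ "insert f (vanishing_ideal s X)" s] by blast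
  moreover have "h * f \<in> ?J"
    using is_ideal_mult[OF is_ideal_gen_ideal gen_ideal_base[of f] Sd_Pring[OF h(1)]] by blast
  ultimately have "(g - h * f) + h * f \<in> ?J" using is_ideal_add[OF is_ideal_gen_ideal] by blast
  then show "g \<in> ?J \<inter> Sd s n" using g by simp
qed

lemma deg_quot_eq_eventual_hilbert_fun:
  assumes "krull_dim_quot s J = 1" "\<And>n. N \<le> n \<Longrightarrow> hilbert_fun s J n = c"
  shows "deg_quot s J = real c"
proof -
  have "(\<lambda>d. real (hilbert_fun s J d) / real d ^ (1 - 1)) \<longlonglongrightarrow> real c"
    by (rule tendsto_eventually) (use assms(2) in \<open>auto simp: eventually_sequentially\<close>)
  then show ?thesis unfolding deg_quot_def using assms(1) by (simp add: limI)
qed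

section \<open>Monomial orders and standard monomials\<close>

context
  fixes s :: nat and ord :: "(nat \<Rightarrow>\<^sub>0 nat) \<Rightarrow> (nat \<Rightarrow>\<^sub>0 nat) \<Rightarrow> bool"
  assumes mo: "monomial_order s ord"
begin

abbreviation "monos_in_vars \<equiv> {m::nat\<Rightarrow>\<^sub>0nat. keys m \<subseteq> {..<s}}"

lemma monomial_order_unfolded: "(\<forall>a\<in>monos_in_vars. \<not> ord a a) \<and>
       (\<forall>a\<in>monos_in_vars. \<forall>b\<in>monos_in_vars. \<forall>c\<in>monos_in_vars. ord a b \<longrightarrow> ord b c \<longrightarrow> ord a c) \<and>
       (\<forall>a\<in>monos_in_vars. \<forall>b\<in>monos_in_vars. a = b \<or> ord a b \<or> ord b a) \<and>
       (\<forall>a\<in>monos_in_vars. \<forall>b\<in>monos_in_vars. \<forall>c\<in>monos_in_vars. ord a b \<longrightarrow> ord (a + c) (b + c)) \<and>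
       (\<forall>a\<in>monos_in_vars. a \<noteq> 0 \<longrightarrow> ord 0 a)"
  using mo unfolding monomial_order_def Let_def .

lemma monomial_order_irrefl: "keys a \<subseteq> {..<s} \<Longrightarrow> \<not> ord a a"
  by (rule monomial_order_unfolded[THEN conjunct1, rule_format]) simp

lemma monomial_order_trans:
  "keys a \<subseteq> {..<s} \<Longrightarrow> keys b \<subseteq> {..<s} \<Longrightarrow> keys c \<subseteq> {..<s} \<Longrightarrow>
    ord a b \<Longrightarrow> ord b c \<Longrightarrow> ord a c"
  by (rule monomial_order_unfolded[THEN conjunct2, THEN conjunct1, rule_format]) simp_all

lemma monomial_order_total: "keys a \<subseteq> {..<s} \<Longrightarrow> keys b \<subseteq> {..<s} \<Longrightarrow> a = b \<or> ord a b \<or> ord b a"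
  by (rule monomial_order_unfolded[THEN conjunct2, THEN conjunct2, THEN conjunct1, rule_format]) simp_all

lemma monomial_order_add:
  "keys a \<subseteq> {..<s} \<Longrightarrow> keys b \<subseteq> {..<s} \<Longrightarrow> keys c \<subseteq> {..<s} \<Longrightarrow>
    ord a b \<Longrightarrow> ord (a + c) (b + c)"
  by (rule monomial_order_unfolded[THEN conjunct2, THEN conjunct2, THEN conjunct2, THEN conjunct1,
        rule_format]) simp_all

lemma monomial_order_max_exists:
  assumes "finite S" "S \<noteq> {}" "S \<subseteq> monos_in_vars"
  shows "\<exists>m\<in>S. \<forall>k\<in>S. k \<noteq> m \<longrightarrow> ord k m"
  using assms
proof (induction S rule: finite_ne_induct)
  case (singleton x) then show ?case by auto
next
  case (insert x F)
  then obtain m where m: "m \<in> F" "\<forall>k\<in>F. k \<noteq> m \<longrightarrow> ord k m" by auto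
  have x: "keys x \<subseteq> {..<s}" and mM: "keys m \<subseteq> {..<s}" and FM: "\<forall>k\<in>F. keys k \<subseteq> {..<s}"
    using insert m by auto
  show ?case
  proof (cases "ord m x")
    case True
    have "\<forall>k\<in>insert x F. k \<noteq> x \<longrightarrow> ord k x"
    proof (intro ballI impI)
      fix k assume "k \<in> insert x F" "k \<noteq> x"
      then have "k \<in> F" by auto
      then show "ord k x"
        using m True monomial_order_trans[OF _ mM x, of k] FM by (cases "k = m") auto
    qed
    then show ?thesis by blast
  next
    case False
    then have "x = m \<or> ord x m" using monomial_order_total[OF x mM] by auto
    then have "\<forall>k\<in>insert x F. k \<noteq> m \<longrightarrow> ord k m" using m by auto
    then show ?thesis using m(1) by blast
  qed
qed

lemma lead_mono_spec:
  assumes "f \<noteq> 0" "f \<in> Pring s"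
  shows "lead_mono ord f \<in> keys f" "\<forall>m'\<in>keys f. m' \<noteq> lead_mono ord f \<longrightarrow> ord m' (lead_mono ord f)"
proof -
  have KM: "keys f \<subseteq> monos_in_vars" using assms(2) by (auto simp: Pring_def)
  have ne: "keys f \<noteq> {}" using assms(1) by simp
  obtain m where m: "m \<in> keys f" "\<forall>k\<in>keys f. k \<noteq> m \<longrightarrow> ord k m"
    using monomial_order_max_exists[OF finite_keys ne KM] by blast
  have mM: "keys m \<subseteq> {..<s}" using KM m(1) by blast
  have uniq: "m' = m" if m': "m' \<in> keys f" "\<forall>k\<in>keys f. k \<noteq> m' \<longrightarrow> ord k m'" for m'
  proof (rule ccontr)
    assume ne: "m' \<noteq> m"
    have 1: "ord m' m" using m(2) m'(1) ne by blast
    have ne2: "m \<noteq> m'" using ne by simp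
    have 2: "ord m m'" using m'(2) m(1) ne2 by blast
    have m'M: "keys m' \<subseteq> {..<s}" using KM m'(1) by blast
    have "ord m m" using monomial_order_trans[OF mM m'M mM 2 1] .
    then show False using monomial_order_irrefl[OF mM] by blast
  qed
  have "lead_mono ord f = m" unfolding lead_mono_def
  proof (rule the_equality)
    show "m \<in> keys f \<and> (\<forall>m'\<in>keys f. m' \<noteq> m \<longrightarrow> ord m' m)" using m by blast
    show "\<And>x. x \<in> keys f \<and> (\<forall>m'\<in>keys f. m' \<noteq> x \<longrightarrow> ord m' x) \<Longrightarrow> x = m" using uniq by blast
  qed
  then show "lead_mono ord f \<in> keys f" "\<forall>m'\<in>keys f. m' \<noteq> lead_mono ord f \<longrightarrow> ord m' (lead_mono ord f)"
    using m by auto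
qed

end

lemma lookup_single_one_mult:
  "lookup (single u (1::'a::field) * (p::'a mpoly)) (u + x) = lookup p x"
proof -
  have "single u 1 * p = (\<Sum>y\<in>keys p. single (u + y) (lookup p y))"
    by (subst poly_mapping_sum_single[of p]) (simp add: sum_distrib_left mult_single)
  then have "lookup (single u 1 * p) (u + x) = (\<Sum>y\<in>keys p. if u + y = u + x then lookup p y else 0)"
    by (simp add: lookup_sum lookup_single when_def)
  also have "\<dots> = (\<Sum>y\<in>keys p. if y = x then lookup p y else 0)"
    by (rule sum.cong[OF refl]) (simp only: add_left_cancel)
  also have "\<dots> = lookup p x" by (simp add: sum.delta' in_keys_iff)
  finally show ?thesis .
qed

lemma keys_single_one_mult: "keys (single u (1::'a::field) * (p::'a mpoly)) \<subseteq> (\<lambda>x. u + x) ` keys p"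
  using keys_mult[of "single u 1" p] by auto

lemma lead_mono_dvd_if_single_in_init_ideal:
  assumes "single m (1::'a::field) \<in> init_ideal s ord I"
  shows "\<exists>f\<in>I. f \<noteq> 0 \<and> (\<exists>u. m = lead_mono ord f + u)"
proof -
  define T :: "'a mpoly set" where "T = {p. \<forall>k\<in>keys p. \<exists>f\<in>I. f \<noteq> 0 \<and> (\<exists>u. k = lead_mono ord f + u)}"
  have "is_ideal s T" unfolding is_ideal_def
  proof (intro conjI ballI)
    show "0 \<in> T" by (simp add: T_def)
  next
    fix a b assume "a \<in> T" "b \<in> T"
    then show "a + b \<in> T" using keys_add[of a b] unfolding T_def by blast
  next
    fix a r :: "'a mpoly" assume a: "a \<in> T" and "r \<in> Pring s"
    show "r * a \<in> T" unfolding T_def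
    proof (rule CollectI, rule ballI)
      fix k assume "k \<in> keys (r * a)"
      then obtain x y where xy: "k = x + y" "y \<in> keys a" using keys_mult[of r a] by blast
      then obtain f u where "f \<in> I" "f \<noteq> 0" "y = lead_mono ord f + u"
        using a unfolding T_def by blast
      then show "\<exists>f\<in>I. f \<noteq> 0 \<and> (\<exists>u. k = lead_mono ord f + u)" using xy
        by (intro bexI[of _ f] conjI exI[of _ "u + x"]) (simp_all add: add_ac)
    qed
  qed
  moreover have "{single (lead_mono ord f) 1 | f. f \<in> I \<and> f \<noteq> 0} \<subseteq> T"
    unfolding T_def by (auto intro!: exI[of _ 0])
  ultimately have "init_ideal s ord I \<subseteq> T"
    unfolding init_ideal_def by (rule gen_ideal_least[rotated])
  then have "single m (1::'a) \<in> T" using assms by blast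
  then show ?thesis unfolding T_def by simp
qed

lemma single_lead_mono_in_init_ideal:
  assumes "f \<in> I" "f \<noteq> 0"
  shows "single (lead_mono ord f) (1::'a::field) \<in> init_ideal s ord I"
  unfolding init_ideal_def using assms by (intro gen_ideal_base) blast

context
  fixes s :: nat and ord :: "(nat \<Rightarrow>\<^sub>0 nat) \<Rightarrow> (nat \<Rightarrow>\<^sub>0 nat) \<Rightarrow> bool"
    and X :: "(nat \<Rightarrow> 'a::field) set set"
  assumes mo: "monomial_order s ord" and X: "X \<subseteq> proj_space s"
begin

lemma exists_reducer:
  assumes m: "keys m \<subseteq> {..<s}" "mdeg m = d"
    "single m (1::'a) \<in> init_ideal s ord (vanishing_ideal s X)"
  shows "\<exists>h. h \<in> vanishing_ideal s X \<and> h \<in> Sd s d \<and> lookup h m \<noteq> 0 \<and> (\<forall>k\<in>keys h. k \<noteq> m \<longrightarrow> ord k m)"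
proof -
  obtain f u where f: "f \<in> vanishing_ideal s X" "f \<noteq> 0" "m = lead_mono ord f + u"
    using lead_mono_dvd_if_single_in_init_ideal[OF m(3)] by blast
  define a where "a = lead_mono ord f"
  have fP: "f \<in> Pring s" using f(1) vanishing_ideal_subset_Pring by blast
  have a: "a \<in> keys f" "\<forall>m'\<in>keys f. m' \<noteq> a \<longrightarrow> ord m' a"
    using lead_mono_spec[OF mo f(2) fP] unfolding a_def by auto
  have aM: "keys a \<subseteq> {..<s}" using fP a(1) by (auto simp: Pring_def)
  have ma: "m = a + u" using f(3) a_def by simp
  have uM: "keys u \<subseteq> {..<s}" using m(1) ma by (simp add: keys_add_nat)
  define fk where "fk = homog_comp (mdeg a) f"
  have fkI: "fk \<in> vanishing_ideal s X" unfolding fk_def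
    using vanishing_ideal_homog_comp[OF X f(1)] .
  have fkS: "fk \<in> Sd s (mdeg a)" unfolding fk_def using homog_comp_Sd[OF fP] .
  have akeys: "a \<in> keys fk" using a(1) by (simp add: fk_def keys_homog_comp)
  have fkkeys: "keys fk \<subseteq> keys f" by (auto simp: fk_def keys_homog_comp)
  define h where "h = single u 1 * fk"
  have "single u (1::'a) \<in> Sd s (mdeg u)" using uM by (intro Sd_single) auto
  then have "h \<in> Sd s (mdeg u + mdeg a)" unfolding h_def using Sd_mult[OF _ fkS] by blast
  moreover have "mdeg u + mdeg a = d" using m(2) ma by (simp add: mdeg_add)
  ultimately have hS: "h \<in> Sd s d" by simp
  have hI: "h \<in> vanishing_ideal s X" unfolding h_def
    using is_ideal_mult[OF is_ideal_vanishing_ideal fkI] uM by (simp add: Pring_single)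
  have "lookup h m = lookup fk a"
    unfolding h_def ma by (simp add: add.commute[of a u] lookup_single_one_mult)
  then have hm: "lookup h m \<noteq> 0" using akeys by (simp add: in_keys_iff)
  have hk: "\<forall>k\<in>keys h. k \<noteq> m \<longrightarrow> ord k m"
  proof (intro ballI impI)
    fix k assume k: "k \<in> keys h" "k \<noteq> m"
    then obtain x where x: "x \<in> keys fk" "k = u + x"
      using keys_single_one_mult[of u fk] unfolding h_def by blast
    have "x \<noteq> a" using x k(2) ma by (auto simp: add.commute)
    then have "ord x a" using a(2) x(1) fkkeys by blast
    moreover have "keys x \<subseteq> {..<s}" using fP x(1) fkkeys by (auto simp: Pring_def)
    ultimately have "ord (x + u) (a + u)" using monomial_order_add[OF mo _ aM uM] by blast
    then show "ord k m" using x(2) ma by (simp add: add.commute)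
  qed
  show ?thesis using hI hS hm hk by blast
qed

definition nonstd_keys :: "'a mpoly \<Rightarrow> (nat \<Rightarrow>\<^sub>0 nat) set" where
  "nonstd_keys g = {k\<in>keys g. single k (1::'a) \<in> init_ideal s ord (vanishing_ideal s X)}"

definition nonstd_downset :: "nat \<Rightarrow> 'a mpoly \<Rightarrow> (nat \<Rightarrow>\<^sub>0 nat) set" where
  "nonstd_downset d g = {n\<in>monos_deg s d. \<exists>k\<in>nonstd_keys g. n = k \<or> ord n k}"

lemma exists_reduction:
  assumes g: "g \<in> Sd s d" and m: "m \<in> nonstd_keys g"
  shows "\<exists>g'. g' \<in> Sd s d \<and> g - g' \<in> vanishing_ideal s X \<and> m \<notin> keys g' \<and>
      (\<forall>k\<in>keys g'. k \<in> keys g \<or> ord k m)"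
proof -
  have mM: "keys m \<subseteq> {..<s}" "mdeg m = d" using m g by (auto simp: nonstd_keys_def Sd_def Pring_def)
  obtain h where h: "h \<in> vanishing_ideal s X" "h \<in> Sd s d" "lookup h m \<noteq> 0"
      "\<forall>k\<in>keys h. k \<noteq> m \<longrightarrow> ord k m"
    using exists_reducer[OF mM] m by (auto simp: nonstd_keys_def)
  define g' where "g' = g - kscale (lookup g m / lookup h m) h"
  have "g' \<in> Sd s d" unfolding g'_def using g h(2) by blast
  moreover have "g - g' \<in> vanishing_ideal s X" unfolding g'_def
    using is_ideal_mult[OF is_ideal_vanishing_ideal h(1), of "single 0 (lookup g m / lookup h m)"]
    by (simp add: kscale_mult Pring_single)
  moreover have m': "m \<notin> keys g'"
    unfolding g'_def using h(3) by (simp add: in_keys_iff lookup_minus lookup_kscale)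
  moreover have "keys g' \<subseteq> keys g \<union> keys h" unfolding g'_def
    by (auto simp: in_keys_iff lookup_minus lookup_kscale)
  then have "\<forall>k\<in>keys g'. k \<in> keys g \<or> ord k m" using h(4) m' by auto
  ultimately show ?thesis by blast
qed

text \<open>Cancelling the largest nonstandard key \<open>m\<close> only introduces smaller monomials, so the set of
  monomials below some nonstandard key loses \<open>m\<close> and gains nothing.\<close>
lemma reduce_step:
  assumes g: "g \<in> Sd s d" and ne: "nonstd_keys g \<noteq> {}"
  shows "\<exists>g'. g' \<in> Sd s d \<and> g - g' \<in> vanishing_ideal s X \<and>
      card (nonstd_downset d g') < card (nonstd_downset d g)"
proof -
  have gM: "keys g \<subseteq> monos_deg s d" using g by (auto simp: Sd_def Pring_def monos_deg_def)
  have "nonstd_keys g \<subseteq> monos_in_vars s" using gM by (auto simp: nonstd_keys_def monos_deg_def)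
  then obtain m where m: "m \<in> nonstd_keys g" "\<forall>k\<in>nonstd_keys g. k \<noteq> m \<longrightarrow> ord k m"
    using monomial_order_max_exists[OF mo _ ne] by (auto simp: nonstd_keys_def)
  have mM: "m \<in> monos_deg s d" "keys m \<subseteq> {..<s}"
    using m(1) gM by (auto simp: nonstd_keys_def monos_deg_def)
  obtain g' where g': "g' \<in> Sd s d" "g - g' \<in> vanishing_ideal s X" "m \<notin> keys g'"
      "\<forall>k\<in>keys g'. k \<in> keys g \<or> ord k m"
    using exists_reduction[OF g m(1)] by blast
  have ordk: "ord k m" if "k \<in> nonstd_keys g'" for k
  proof -
    have k: "k \<in> keys g'" "single k 1 \<in> init_ideal s ord (vanishing_ideal s X)"
      using that by (auto simp: nonstd_keys_def)
    then have "k \<noteq> m" using g'(3) by blast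
    show ?thesis
    proof (cases "k \<in> keys g")
      case True
      then have "k \<in> nonstd_keys g" using k(2) by (simp add: nonstd_keys_def)
      then show ?thesis using m(2) \<open>k \<noteq> m\<close> by blast
    qed (use g'(4) k(1) in blast)
  qed
  have "nonstd_downset d g' \<subseteq> nonstd_downset d g - {m}"
  proof
    fix n assume "n \<in> nonstd_downset d g'"
    then obtain k where k: "n \<in> monos_deg s d" "k \<in> nonstd_keys g'" "n = k \<or> ord n k"
      by (auto simp: nonstd_downset_def)
    have nM: "keys n \<subseteq> {..<s}" using k(1) by (auto simp: monos_deg_def)
    have kM: "keys k \<subseteq> {..<s}" using k(2) g'(1) by (auto simp: nonstd_keys_def Sd_def Pring_def)
    have "ord n m" using k(3) ordk[OF k(2)] monomial_order_trans[OF mo nM kM mM(2)] by blast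
    then show "n \<in> nonstd_downset d g - {m}"
      using k(1) m(1) monomial_order_irrefl[OF mo mM(2)] by (auto simp: nonstd_downset_def)
  qed
  moreover have "m \<in> nonstd_downset d g" using mM(1) m(1) by (auto simp: nonstd_downset_def)
  moreover have "finite (nonstd_downset d g)"
    using finite_monos_deg[of s d] by (rule finite_subset[rotated]) (auto simp: nonstd_downset_def)
  ultimately have "card (nonstd_downset d g') < card (nonstd_downset d g)"
    by (meson card_Diff1_less card_mono finite_Diff le_less_trans)
  then show ?thesis using g' by blast
qed

lemma exists_standard_normal_form:
  assumes "g \<in> Sd s d"
  shows "\<exists>f. keys f \<subseteq> std_monos s ord (vanishing_ideal s X) d \<and> g - f \<in> vanishing_ideal s X"
  using assms
proof (induction "card (nonstd_downset d g)" arbitrary: g rule: less_induct)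
  case less
  show ?case
  proof (cases "nonstd_keys g = {}")
    case True
    then have "keys g \<subseteq> std_monos s ord (vanishing_ideal s X) d"
      using less.prems by (auto simp: nonstd_keys_def std_monos_def Sd_def Pring_def)
    moreover have "g - g \<in> vanishing_ideal s X"
      using is_ideal_zero[OF is_ideal_vanishing_ideal] by simp
    ultimately show ?thesis by blast
  next
    case False
    obtain g' where g': "g' \<in> Sd s d" "g - g' \<in> vanishing_ideal s X"
        "card (nonstd_downset d g') < card (nonstd_downset d g)"
      using reduce_step[OF less.prems False] by blast
    obtain f where f: "keys f \<subseteq> std_monos s ord (vanishing_ideal s X) d" "g' - f \<in> vanishing_ideal s X"
      using less.hyps[OF g'(3) g'(1)] by blast
    have "(g - g') + (g' - f) \<in> vanishing_ideal s X"
      using is_ideal_add[OF is_ideal_vanishing_ideal g'(2) f(2)] .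
    then show ?thesis using f(1) by auto
  qed
qed

end

lemma std_monos_subset: "std_monos s ord I d \<subseteq> monos_deg s d"
  by (auto simp: std_monos_def monos_deg_def)

lemma Sd_if_keys_std: "keys f \<subseteq> std_monos s ord I d \<Longrightarrow> f \<in> Sd s d"
  by (auto simp: std_monos_def Sd_def Pring_def)

lemma finite_F_set: "finite (F_set s ord I d :: 'a::{finite,field} mpoly set)"
proof (rule finite_subset)
  show "F_set s ord I d \<subseteq> {p. keys p \<subseteq> std_monos s ord I d \<and> (\<forall>i. lookup p i \<in> UNIV)}"
    by (auto simp: F_set_def)
qed (intro finite_poly_mappings_bounded finite_subset[OF std_monos_subset finite_monos_deg]
    finite_UNIV)

section \<open>Degrees and the minimum distance\<close>

context
  fixes s :: nat and X :: "(nat \<Rightarrow> 'a::field) set set"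
  assumes X: "X \<subseteq> proj_space s" and finX: "finite X"
begin

abbreviation "IX \<equiv> vanishing_ideal s X"

lemma deg_quot_vanishing_ideal: "X \<noteq> {} \<Longrightarrow> deg_quot s IX = real (card X)"
proof -
  assume "X \<noteq> {}"
  then obtain P where P: "P \<in> X" by blast
  have k: "krull_dim_quot s IX = 1"
    by (rule krull_dim_quot_eq_1[OF X finX order.refl P vanishing_ideal_subset_point_ideal[OF X P]])
  show ?thesis
  proof (rule deg_quot_eq_eventual_hilbert_fun[OF k])
    fix n assume "card X - 1 \<le> n"
    then show "hilbert_fun s IX n = card X"
      by (rule hilbert_fun_eq_card[OF X finX order.refl _ vanishing_ideal_Sd[OF X]])
  qed
qed

lemma deg_quot_gen_ideal_insert:
  assumes f: "f \<in> Sd s d" "zero_points s X f \<noteq> {}"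
  shows "deg_quot s (gen_ideal s (insert f IX)) = real (card (zero_points s X f))"
proof -
  obtain P where P: "P \<in> X" "eval_mpoly f (proj_rep s P) = 0"
    using f(2) by (auto simp: zero_points_def)
  have sub1: "IX \<subseteq> gen_ideal s (insert f IX)" using gen_ideal_base by blast
  have sub2: "gen_ideal s (insert f IX) \<subseteq> point_ideal s P"
  proof (rule gen_ideal_least[OF _ is_ideal_point_ideal])
    have "f \<in> point_ideal s P"
      using f(1) P(2) by (simp add: point_ideal_def restrict_line_form Sd_Pring)
    then show "insert f IX \<subseteq> point_ideal s P"
      using vanishing_ideal_subset_point_ideal[OF X P(1)] by blast
  qed
  have k: "krull_dim_quot s (gen_ideal s (insert f IX)) = 1"
    by (rule krull_dim_quot_eq_1[OF X finX sub1 P(1) sub2])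
  show ?thesis
  proof (rule deg_quot_eq_eventual_hilbert_fun[OF k])
    fix n assume n: "d + (card X - 1) \<le> n"
    show "hilbert_fun s (gen_ideal s (insert f IX)) n = card (zero_points s X f)"
      by (rule hilbert_fun_eq_card[OF X finX _ _ gen_ideal_insert_Sd[OF X finX f(1) n]])
        (use n in \<open>auto simp: zero_points_def\<close>)
  qed
qed

context
  fixes ord :: "(nat \<Rightarrow>\<^sub>0 nat) \<Rightarrow> (nat \<Rightarrow>\<^sub>0 nat) \<Rightarrow> bool" and d :: nat
  assumes mo: "monomial_order s ord"
begin

lemma F_set_props:
  assumes f: "f \<in> F_set s ord IX d"
  shows "f \<in> Sd s d" "f \<notin> IX" "zero_points s X f \<noteq> {}"
proof -
  have k: "keys f \<subseteq> std_monos s ord IX d" "f \<noteq> 0" "colon_ideal s IX f \<noteq> IX"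
    using f by (auto simp: F_set_def)
  show fS: "f \<in> Sd s d" using Sd_if_keys_std[OF k(1)] .
  show "f \<notin> IX"
  proof
    assume "f \<in> IX"
    then have "single (lead_mono ord f) (1::'a) \<in> init_ideal s ord IX"
      using single_lead_mono_in_init_ideal k(2) by blast
    moreover have "lead_mono ord f \<in> keys f" using lead_mono_spec(1)[OF mo k(2) Sd_Pring[OF fS]] .
    ultimately show False using k(1) by (auto simp: std_monos_def)
  qed
  show "zero_points s X f \<noteq> {}"
  proof
    assume "zero_points s X f = {}"
    then have "\<forall>P\<in>X. eval_mpoly f (proj_rep s P) \<noteq> 0" by (auto simp: zero_points_def)
    then show False using colon_ideal_nonvanishing[OF X fS] k(3) by blast
  qed
qed

lemma exists_F_set_same_zeros:
  assumes g: "g \<in> Sd s d" "g \<notin> IX" "zero_points s X g \<noteq> {}"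
  shows "\<exists>f\<in>F_set s ord IX d. zero_points s X f = zero_points s X g"
proof -
  obtain f where f: "keys f \<subseteq> std_monos s ord IX d" "g - f \<in> IX"
    using exists_standard_normal_form[OF mo X g(1)] by blast
  have fS: "f \<in> Sd s d" using Sd_if_keys_std[OF f(1)] .
  have "\<forall>P\<in>X. eval_mpoly (g - f) (proj_rep s P) = 0"
    using form_in_vanishing_ideal_iff[OF X, of "g - f" d] f(2) g(1) fS by blast
  then have ev: "\<forall>P\<in>X. eval_mpoly f (proj_rep s P) = eval_mpoly g (proj_rep s P)" by simp
  then have Zeq: "zero_points s X f = zero_points s X g" by (auto simp: zero_points_def)
  have "f \<noteq> 0" using f(2) g(2) by auto
  moreover obtain P where "P \<in> X" "eval_mpoly f (proj_rep s P) = 0"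
    using g(3) Zeq by (auto simp: zero_points_def)
  then have "colon_ideal s IX f \<noteq> IX" using colon_ideal_vanishing[OF X finX fS] by blast
  ultimately have "f \<in> F_set s ord IX d" using f(1) by (simp add: F_set_def)
  then show ?thesis using Zeq by blast
qed

lemma Max_deg_quot_gen_ideal_insert_F_set:
  assumes "finite (F_set s ord IX d)" "F_set s ord IX d \<noteq> {}"
  shows "Max {deg_quot s (gen_ideal s (insert f IX)) | f. f \<in> F_set s ord IX d} =
         real (Max ((\<lambda>f. card (zero_points s X f)) ` F_set s ord IX d))"
proof -
  let ?F = "F_set s ord IX d" and ?z = "\<lambda>f. card (zero_points s X f)"
  have "{deg_quot s (gen_ideal s (insert f IX)) | f. f \<in> ?F} =
        (\<lambda>f. deg_quot s (gen_ideal s (insert f IX))) ` ?F" by blast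
  also have "\<dots> = real ` ?z ` ?F"
    unfolding image_image
  proof (rule image_cong[OF refl])
    fix f assume "f \<in> ?F"
    then show "deg_quot s (gen_ideal s (insert f IX)) = real (?z f)"
      using deg_quot_gen_ideal_insert F_set_props(1,3) by blast
  qed
  finally show ?thesis
    using mono_Max_commute[of real "?z ` ?F"] assms by (simp add: mono_def)
qed

text \<open>The minimum is attained at a maximiser of the number of zeros over \<open>\<F>\<^sub>\<prec>\<^sub>,\<^sub>d\<close>: forms without
  zeros in \<open>X\<close> contribute the largest weight \<open>|X|\<close>, and every other form is represented in
  \<open>\<F>\<^sub>\<prec>\<^sub>,\<^sub>d\<close> with the same zeros.\<close>
lemma min_dist_eq_card_minus_Max_zeros:
  assumes "finite (F_set s ord IX d)" "F_set s ord IX d \<noteq> {}"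
  shows "min_dist s X d = card X - Max ((\<lambda>f. card (zero_points s X f)) ` F_set s ord IX d)"
proof -
  let ?F = "F_set s ord IX d" and ?z = "\<lambda>f. card (zero_points s X f)"
  define M where "M = Max (?z ` ?F)"
  have "M \<in> ?z ` ?F" unfolding M_def using assms by (intro Max_in) auto
  then obtain f0 where f0: "f0 \<in> ?F" "?z f0 = M" by blast
  have M_ge: "?z f \<le> M" if "f \<in> ?F" for f
    unfolding M_def using assms that by (intro Max_ge) auto
  show ?thesis
    unfolding min_dist_def M_def[symmetric]
  proof (rule Min_eqI)
    show "finite {card X - card (zeros_in X f) | f. f \<in> (Sd s d :: 'a mpoly set) \<and> f \<notin> IX}"
      by (rule finite_subset[of _ "{..card X}"]) auto
  next
    fix y assume "y \<in> {card X - card (zeros_in X f) | f. f \<in> (Sd s d :: 'a mpoly set) \<and> f \<notin> IX}"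
    then obtain g where g: "y = card X - card (zeros_in X g)" "g \<in> Sd s d" "g \<notin> IX" by blast
    have "?z g \<le> M"
    proof (cases "zero_points s X g = {}")
      case False
      then show ?thesis using exists_F_set_same_zeros[OF g(2,3)] M_ge by metis
    qed simp
    then show "card X - M \<le> y" using g(1) zeros_in_eq_zero_points[OF X g(2)] by simp
  next
    show "card X - M \<in> {card X - card (zeros_in X f) | f. f \<in> (Sd s d :: 'a mpoly set) \<and> f \<notin> IX}"
      using f0 F_set_props[OF f0(1)] zeros_in_eq_zero_points[OF X] by fastforce
  qed
qed

lemma card_zero_points_F_set_less: "f \<in> F_set s ord IX d \<Longrightarrow> card (zero_points s X f) < card X"
  using F_set_props[of f] form_in_vanishing_ideal_iff[OF X]
  by (intro psubset_card_mono[OF finX]) (auto simp: zero_points_def)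

end

end

lemma exists_form_with_zero:
  assumes X: "X \<subseteq> proj_space s" and c: "card X \<ge> 2" and d: "d \<ge> 1"
  shows "\<exists>g. g \<in> Sd s d \<and> g \<notin> vanishing_ideal s X \<and> zero_points s X g \<noteq> {}"
proof -
  have "X \<noteq> {}" using c by auto
  then obtain P where P: "P \<in> X" by blast
  have "card (X - {P}) \<ge> 1" using c P by (simp add: card_Diff_singleton_if)
  then have "X - {P} \<noteq> {}" by (intro notI) simp
  then obtain Q where Q: "Q \<in> X" "Q \<noteq> P" by blast
  have PP: "P \<in> proj_space s" and QP: "Q \<in> proj_space s" using P Q X by auto
  obtain L where L: "L \<in> Sd s 1" "eval_mpoly L (proj_rep s P) = 0" "eval_mpoly L (proj_rep s Q) \<noteq> 0"
    using exists_linear_form_separating[OF PP QP] Q(2) by metis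
  obtain j where j: "j < s" "proj_rep s Q j \<noteq> 0" using proj_rep_nonzero[OF QP] by blast
  define g where "g = L * var_pow j (d - 1)"
  have "g \<in> Sd s (1 + (d - 1))" unfolding g_def using Sd_mult[OF L(1) var_pow_Sd[OF j(1)]] .
  then have gS: "g \<in> Sd s d" using d by simp
  have "eval_mpoly g (proj_rep s Q) \<noteq> 0" using L(3) j(2) by (simp add: g_def)
  then have "g \<notin> vanishing_ideal s X" using form_in_vanishing_ideal_iff[OF X gS] Q(1) by blast
  moreover have "P \<in> zero_points s X g" using P L(2) by (simp add: zero_points_def g_def)
  ultimately show ?thesis using gS by blast
qed

theorem corollary4p8:
  fixes s :: nat
    and X :: "(nat \<Rightarrow> 'a::{finite,field}) set set"
    and ord :: "(nat \<Rightarrow>\<^sub>0 nat) \<Rightarrow> (nat \<Rightarrow>\<^sub>0 nat) \<Rightarrow> bool"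
    and d :: nat
  assumes "X \<subseteq> proj_space s"
    and "card X \<ge> 2"
    and "monomial_order s ord"
    and "d \<ge> 1"
  shows "real (min_dist s X d) =
           deg_quot s (vanishing_ideal s X)
           - Max {deg_quot s (gen_ideal s (insert f (vanishing_ideal s X))) | f.
                    f \<in> F_set s ord (vanishing_ideal s X) d}
         \<and> min_dist s X d \<ge> 1"
proof -
  note X = assms(1) and mo = assms(3)
  have finX: "finite X" and "X \<noteq> {}" using assms(2) by (auto intro: card_ge_0_finite)
  let ?F = "F_set s ord (vanishing_ideal s X) d"
  let ?M = "Max ((\<lambda>f. card (zero_points s X f)) ` ?F)"
  have finF: "finite ?F" by (rule finite_F_set)
  obtain g where "g \<in> Sd s d" "g \<notin> vanishing_ideal s X" "zero_points s X g \<noteq> {}"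
    using exists_form_with_zero[OF X assms(2,4)] by blast
  then have "?F \<noteq> {}" using exists_F_set_same_zeros[OF X finX mo] by blast
  then have "?M < card X"
    using finF Max_in[of "(\<lambda>f. card (zero_points s X f)) ` ?F"]
      card_zero_points_F_set_less[OF X finX mo] by auto
  then show ?thesis
    using min_dist_eq_card_minus_Max_zeros[OF X finX mo finF \<open>?F \<noteq> {}\<close>]
      Max_deg_quot_gen_ideal_insert_F_set[OF X finX mo finF \<open>?F \<noteq> {}\<close>]
      deg_quot_vanishing_ideal[OF X finX \<open>X \<noteq> {}\<close>]
    by (simp add: of_nat_diff)
qed

end
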